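(* Let $R$ be a commutative $k$-algebra with a system of coordinates $(x_1,\ldots,x_n)$ and $D=R[\partial_1,\ldots,\partial_n]$. Let $P_1,\ldots,P_n\in D$ have constant principal symbols $\sigma(P_i)\in k[\xi_1,\ldots,\xi_n]$ and assume $\det(\partial\sigma(P_i)/\partial\xi_j)_{i,j}\ne0$. Then every $Q\in D$ with $[P_i,Q]=0$ for $i=1,\ldots,n$ also has constant principal symbol.
   Context: $k$ is a field of characteristic zero. A system of coordinates of $R$: $(x_1,\ldots,x_n)\in R^n$ such that $\mathrm{Der}_k(R)\to R^n$, $\delta\mapsto(\delta(x_i))_i$ is bijective and the common kernel of all derivations is $k$; $\partial_i$ are the derivations with $\partial_i(x_j)=\delta_{ij}$. $D_m\subset D$ is the set of operators of order $\le m$; $\mathrm{gr}(D)=\bigoplus_m D_m/D_{m-1}\simeq R[\xi_1,\ldots,\xi_n]$ with $\xi_i$ the class of $\partial_i$. For $P$ of order $m$, the principal symbol is $\sigma_m(P)=P\bmod D_{m-1}$, a homogeneous polynomial in $\xi$ of degree $m$ with coefficients in $R$; it is called constant if it lies in $k[\xi_1,\ldots,\xi_n]$. *)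

theory Defs
  imports "HOL-Library.Poly_Mapping" "Jordan_Normal_Form.Determinant"
begin

text \<open>The base field k is modelled as a subfield K of the commutative ring R
  (the type 'r); R is then a commutative k-algebra.  Characteristic zero.\<close>

definition subfield_char0 :: "'r::comm_ring_1 set \<Rightarrow> bool" where
  "subfield_char0 K \<longleftrightarrow> 0 \<in> K \<and> 1 \<in> K \<and>
     (\<forall>a\<in>K. \<forall>b\<in>K. a + b \<in> K \<and> a * b \<in> K \<and> - a \<in> K) \<and>
     (\<forall>a\<in>K. a \<noteq> 0 \<longrightarrow> (\<exists>b\<in>K. a * b = 1)) \<and>
     (\<forall>m::nat. m > 0 \<longrightarrow> (of_nat m :: 'r) \<noteq> 0)"

definition derivation :: "'r::comm_ring_1 set \<Rightarrow> ('r \<Rightarrow> 'r) \<Rightarrow> bool" where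
  "derivation K \<delta> \<longleftrightarrow>
     (\<forall>a b. \<delta> (a + b) = \<delta> a + \<delta> b) \<and>
     (\<forall>c\<in>K. \<forall>a. \<delta> (c * a) = c * \<delta> a) \<and>
     (\<forall>a b. \<delta> (a * b) = a * \<delta> b + b * \<delta> a)"

text \<open>A system of coordinates (x_0, ..., x_{n-1}): the map Der_k(R) \<rightarrow> R^n,
  \<delta> \<mapsto> (\<delta>(x_i))_i, is bijective, and the common kernel of all derivations is k.\<close>

definition coordinate_system :: "'r::comm_ring_1 set \<Rightarrow> nat \<Rightarrow> (nat \<Rightarrow> 'r) \<Rightarrow> bool" where
  "coordinate_system K n x \<longleftrightarrow>
     (\<forall>v :: nat \<Rightarrow> 'r. \<exists>!\<delta>. derivation K \<delta> \<and> (\<forall>i<n. \<delta> (x i) = v i)) \<and>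
     {a. \<forall>\<delta>. derivation K \<delta> \<longrightarrow> \<delta> a = 0} = K"

definition partial :: "'r::comm_ring_1 set \<Rightarrow> nat \<Rightarrow> (nat \<Rightarrow> 'r) \<Rightarrow> nat \<Rightarrow> 'r \<Rightarrow> 'r" where
  "partial K n x i = (THE \<delta>. derivation K \<delta> \<and> (\<forall>j<n. \<delta> (x j) = (if j = i then 1 else 0)))"

definition dpow :: "'r::comm_ring_1 set \<Rightarrow> nat \<Rightarrow> (nat \<Rightarrow> 'r) \<Rightarrow> (nat \<Rightarrow>\<^sub>0 nat) \<Rightarrow> 'r \<Rightarrow> 'r" where
  "dpow K n x \<alpha> = foldr (\<lambda>i f. (partial K n x i ^^ Poly_Mapping.lookup \<alpha> i) \<circ> f) [0..<n] id"

text \<open>Multi-indices in n variables; coefficient families (= full symbols, polynomials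
  in \<xi>_0..\<xi>_{n-1} over R, represented as (nat =>0 nat) =>0 'r).\<close>

definition valid_symbol :: "nat \<Rightarrow> ((nat \<Rightarrow>\<^sub>0 nat) \<Rightarrow>\<^sub>0 'r::comm_ring_1) \<Rightarrow> bool" where
  "valid_symbol n c \<longleftrightarrow> (\<forall>\<alpha>\<in>Poly_Mapping.keys c. Poly_Mapping.keys \<alpha> \<subseteq> {..<n})"

definition op_of :: "'r::comm_ring_1 set \<Rightarrow> nat \<Rightarrow> (nat \<Rightarrow> 'r) \<Rightarrow>
    ((nat \<Rightarrow>\<^sub>0 nat) \<Rightarrow>\<^sub>0 'r) \<Rightarrow> 'r \<Rightarrow> 'r" where
  "op_of K n x c = (\<lambda>f. \<Sum>\<alpha>\<in>Poly_Mapping.keys c. Poly_Mapping.lookup c \<alpha> * dpow K n x \<alpha> f)"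

text \<open>D = R[\<partial>_1,...,\<partial>_n], the ring of differential operators, as operators on R.\<close>

definition diffops :: "'r::comm_ring_1 set \<Rightarrow> nat \<Rightarrow> (nat \<Rightarrow> 'r) \<Rightarrow> ('r \<Rightarrow> 'r) set" where
  "diffops K n x = {P. \<exists>c. valid_symbol n c \<and> P = op_of K n x c}"

definition full_symbol :: "'r::comm_ring_1 set \<Rightarrow> nat \<Rightarrow> (nat \<Rightarrow> 'r) \<Rightarrow> ('r \<Rightarrow> 'r) \<Rightarrow>
    ((nat \<Rightarrow>\<^sub>0 nat) \<Rightarrow>\<^sub>0 'r)" where
  "full_symbol K n x P = (THE c. valid_symbol n c \<and> P = op_of K n x c)"

definition total_deg :: "(nat \<Rightarrow>\<^sub>0 nat) \<Rightarrow> nat" where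
  "total_deg \<alpha> = (\<Sum>i\<in>Poly_Mapping.keys \<alpha>. Poly_Mapping.lookup \<alpha> i)"

text \<open>Order of P: the least m with P \<in> D_m, i.e. the maximal |\<alpha>| with a nonzero coefficient.\<close>

definition order :: "'r::comm_ring_1 set \<Rightarrow> nat \<Rightarrow> (nat \<Rightarrow> 'r) \<Rightarrow> ('r \<Rightarrow> 'r) \<Rightarrow> nat" where
  "order K n x P = Max (insert 0 (total_deg ` Poly_Mapping.keys (full_symbol K n x P)))"

text \<open>Principal symbol \<sigma>_m(P) = P mod D_{m-1}, m = order P, identified with the
  homogeneous polynomial \<Sum>_{|\<alpha>|=m} a_\<alpha> \<xi>^\<alpha> via gr(D) \<cong> R[\<xi>].\<close>

definition principal_symbol :: "'r::comm_ring_1 set \<Rightarrow> nat \<Rightarrow> (nat \<Rightarrow> 'r) \<Rightarrow> ('r \<Rightarrow> 'r) \<Rightarrow>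
    ((nat \<Rightarrow>\<^sub>0 nat) \<Rightarrow>\<^sub>0 'r)" where
  "principal_symbol K n x P = Abs_poly_mapping (\<lambda>\<alpha>.
     if total_deg \<alpha> = order K n x P then Poly_Mapping.lookup (full_symbol K n x P) \<alpha> else 0)"

definition constant_poly :: "'r::comm_ring_1 set \<Rightarrow> ((nat \<Rightarrow>\<^sub>0 nat) \<Rightarrow>\<^sub>0 'r) \<Rightarrow> bool" where
  "constant_poly K p \<longleftrightarrow> (\<forall>\<alpha>. Poly_Mapping.lookup p \<alpha> \<in> K)"

definition pderiv_xi :: "nat \<Rightarrow> ((nat \<Rightarrow>\<^sub>0 nat) \<Rightarrow>\<^sub>0 'r::comm_ring_1) \<Rightarrow> ((nat \<Rightarrow>\<^sub>0 nat) \<Rightarrow>\<^sub>0 'r)" where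
  "pderiv_xi j p = Abs_poly_mapping (\<lambda>\<alpha>.
     of_nat (Poly_Mapping.lookup \<alpha> j + 1) * Poly_Mapping.lookup p (\<alpha> + Poly_Mapping.single j 1))"

definition commutator :: "('r::comm_ring_1 \<Rightarrow> 'r) \<Rightarrow> ('r \<Rightarrow> 'r) \<Rightarrow> 'r \<Rightarrow> 'r" where
  "commutator P Q = (\<lambda>f. P (Q f) - Q (P f))"

end

theory Submission
  imports Defs
begin

(* For P = op p of order a and Q = op q of order b, the commutator [P, Q] agrees modulo
   order a + b - 2 with the operator of the Poisson bracket
   {p, q} = \<Sum>_j \<partial>p/\<partial>\<xi>_j \<partial>q/\<partial>x_j - \<partial>q/\<partial>\<xi>_j \<partial>p/\<partial>x_j, whose degree a + b - 1 part only involves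
   the principal symbols.  If \<sigma>(P) is constant its x-derivatives vanish, so [P, Q] = 0
   forces \<Sum>_j \<partial>\<sigma>(P)/\<partial>\<xi>_j \<partial>\<sigma>(Q)/\<partial>x_j = 0.  For P_1, ..., P_n: the Jacobian M = (\<partial>\<sigma>(P_i)/\<partial>\<xi>_j)
   kills the vector (\<partial>\<sigma>(Q)/\<partial>x_j)_j, so by the adjugate det M \<cdot> \<partial>\<sigma>(Q)/\<partial>x_j = 0; det M is a
   nonzero polynomial over k, not a zero divisor, so all coefficients of \<sigma>(Q) lie in the
   common kernel k of the \<partial>_j. *)

lemma derivation_add: "derivation K \<delta> \<Longrightarrow> \<delta> (a + b) = \<delta> a + \<delta> b"
  by (simp add: derivation_def)

lemma derivation_mult: "derivation K \<delta> \<Longrightarrow> \<delta> (a * b) = a * \<delta> b + b * \<delta> a"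
  by (simp add: derivation_def)

lemma derivation_cmult: "derivation K \<delta> \<Longrightarrow> c \<in> K \<Longrightarrow> \<delta> (c * a) = c * \<delta> a"
  unfolding derivation_def by blast

lemma derivation_zero: "derivation K \<delta> \<Longrightarrow> \<delta> 0 = 0"
  using derivation_add[of K \<delta> 0 0] by simp

lemma derivation_one: "derivation K \<delta> \<Longrightarrow> \<delta> 1 = 0"
  using derivation_mult[of K \<delta> 1 1] by simp

lemma derivation_sum: "derivation K \<delta> \<Longrightarrow> \<delta> (\<Sum>i\<in>A. f i) = (\<Sum>i\<in>A. \<delta> (f i))"
  by (induction A rule: infinite_finite_induct) (auto simp: derivation_zero derivation_add)

text \<open>Derivations are k-linear, so they kill the constants.\<close>

lemma derivation_const: "derivation K \<delta> \<Longrightarrow> c \<in> K \<Longrightarrow> \<delta> c = 0"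
  using derivation_cmult[of K \<delta> c 1] derivation_one[of K \<delta>] by simp

lemma subfield_of_nat: "subfield_char0 K \<Longrightarrow> of_nat m \<in> K"
  by (induction m) (auto simp: subfield_char0_def)

text \<open>Characteristic zero: positive integers are invertible in k, hence cancellable in R.\<close>

lemma subfield_of_nat_cancel:
  assumes "subfield_char0 (K::'r::comm_ring_1 set)" "m > 0" "of_nat m * (a::'r) = 0"
  shows "a = 0"
proof -
  obtain b where "b \<in> K" "of_nat m * b = (1::'r)"
    using subfield_of_nat[OF assms(1), of m] assms(1,2) unfolding subfield_char0_def by blast
  then have "a = b * (of_nat m * a)" by (simp add: algebra_simps)
  then show ?thesis using assms(3) by simp
qed

lemma subfield_sum: "subfield_char0 K \<Longrightarrow> (\<And>i. i \<in> A \<Longrightarrow> f i \<in> K) \<Longrightarrow> sum f A \<in> K"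
  by (induction A rule: infinite_finite_induct) (auto simp: subfield_char0_def)

definition multi_index :: "nat \<Rightarrow> (nat \<Rightarrow>\<^sub>0 nat) \<Rightarrow> bool" where
  "multi_index n \<alpha> \<longleftrightarrow> Poly_Mapping.keys \<alpha> \<subseteq> {..<n}"

definition unit_index :: "nat \<Rightarrow> (nat \<Rightarrow>\<^sub>0 nat)" where
  "unit_index j = Poly_Mapping.single j 1"

lemma lookup_unit_index[simp]: "Poly_Mapping.lookup (unit_index j) i = (if i = j then 1 else 0)"
  unfolding unit_index_def by (simp add: lookup_single)

lemma keys_unit_index[simp]: "Poly_Mapping.keys (unit_index j) = {j}"
  unfolding unit_index_def by simp

lemma total_deg_superset:
  "finite S \<Longrightarrow> Poly_Mapping.keys \<alpha> \<subseteq> S \<Longrightarrow> total_deg \<alpha> = (\<Sum>i\<in>S. Poly_Mapping.lookup \<alpha> i)"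
  unfolding total_deg_def by (rule sum.mono_neutral_left) (auto simp: in_keys_iff)

lemma total_deg_add[simp]: "total_deg (\<alpha> + \<beta>) = total_deg \<alpha> + total_deg \<beta>"
proof -
  let ?S = "Poly_Mapping.keys \<alpha> \<union> Poly_Mapping.keys \<beta>"
  have "total_deg (\<alpha> + \<beta>) = (\<Sum>i\<in>?S. Poly_Mapping.lookup (\<alpha> + \<beta>) i)"
    by (rule total_deg_superset) (use keys_add[of \<alpha> \<beta>] in auto)
  also have "\<dots> = (\<Sum>i\<in>?S. Poly_Mapping.lookup \<alpha> i) + (\<Sum>i\<in>?S. Poly_Mapping.lookup \<beta> i)"
    by (simp add: lookup_add sum.distrib)
  also have "\<dots> = total_deg \<alpha> + total_deg \<beta>"
    by (simp add: total_deg_superset[symmetric])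
  finally show ?thesis .
qed

lemma total_deg_unit_index[simp]: "total_deg (unit_index j) = 1"
  unfolding unit_index_def total_deg_def by simp

lemma total_deg_eq_0_iff: "total_deg \<alpha> = 0 \<longleftrightarrow> \<alpha> = 0"
proof
  assume "total_deg \<alpha> = 0"
  then have "\<forall>i. Poly_Mapping.lookup \<alpha> i = 0"
    unfolding total_deg_def by (auto simp: in_keys_iff)
  then show "\<alpha> = 0" by (intro poly_mapping_eqI) simp
qed (simp add: total_deg_def)

lemma minus_unit_index_add:
  "Poly_Mapping.lookup \<alpha> j > 0 \<Longrightarrow> \<alpha> - unit_index j + unit_index j = \<alpha>"
  by (intro poly_mapping_eqI) (auto simp: lookup_add lookup_minus)

lemma multi_index_add: "multi_index n (\<alpha> + \<beta>) \<longleftrightarrow> multi_index n \<alpha> \<and> multi_index n \<beta>"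
proof -
  have "Poly_Mapping.keys (\<alpha> + \<beta>) = Poly_Mapping.keys \<alpha> \<union> Poly_Mapping.keys \<beta>"
    by (auto simp: in_keys_iff lookup_add)
  then show ?thesis unfolding multi_index_def by auto
qed

lemma multi_index_unit: "multi_index n (unit_index j) \<longleftrightarrow> j < n"
  unfolding multi_index_def by simp

lemma multi_index_minus:
  assumes "multi_index n \<alpha>" shows "multi_index n (\<alpha> - unit_index j)"
proof -
  have "Poly_Mapping.keys (\<alpha> - unit_index j) \<subseteq> Poly_Mapping.keys \<alpha>"
    by (auto simp: in_keys_iff lookup_minus)
  then show ?thesis using assms unfolding multi_index_def by blast
qed

lemma multi_index_induct[consumes 1, case_names zero step]:
  assumes "multi_index n \<beta>" "P 0"
    "\<And>\<beta> j. j < n \<Longrightarrow> multi_index n \<beta> \<Longrightarrow> P \<beta> \<Longrightarrow> P (\<beta> + unit_index j)"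
  shows "P \<beta>"
  using assms(1)
proof (induction "total_deg \<beta>" arbitrary: \<beta> rule: less_induct)
  case (less \<beta>)
  show ?case
  proof (cases "\<beta> = 0")
    case True then show ?thesis using assms(2) by simp
  next
    case False
    then obtain j where "j \<in> Poly_Mapping.keys \<beta>"
      by (metis keys_zero lookup_zero not_in_keys_iff_lookup_eq_zero poly_mapping_eqI)
    then have j: "Poly_Mapping.lookup \<beta> j > 0" by (simp add: in_keys_iff)
    define \<beta>' where "\<beta>' = \<beta> - unit_index j"
    have eq: "\<beta> = \<beta>' + unit_index j" unfolding \<beta>'_def using minus_unit_index_add[OF j] by simp
    have v: "multi_index n \<beta>'" unfolding \<beta>'_def using multi_index_minus[OF less.prems] .
    have "j < n" using \<open>j \<in> Poly_Mapping.keys \<beta>\<close> less.prems unfolding multi_index_def by blast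
    moreover have "P \<beta>'" using less.hyps v arg_cong[OF eq, of total_deg] by simp
    ultimately show ?thesis using assms(3) v eq by metis
  qed
qed

locale coordinates =
  fixes K :: "'r::comm_ring_1 set" and n :: nat and x :: "nat \<Rightarrow> 'r"
  assumes subfield: "subfield_char0 K" and coords: "coordinate_system K n x"
begin

abbreviation "d \<equiv> partial K n x"
abbreviation "dp \<equiv> dpow K n x"

lemma derivation_exists_unique: "\<exists>!\<delta>. derivation K \<delta> \<and> (\<forall>i<n. \<delta> (x i) = v i)"
  using coords unfolding coordinate_system_def by blast

lemma d_spec: "derivation K (d i) \<and> (\<forall>j<n. d i (x j) = (if j = i then 1 else 0))"
  unfolding partial_def by (rule theI'[OF derivation_exists_unique])

lemma d_derivation: "derivation K (d i)" using d_spec by blast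

lemma d_x: "j < n \<Longrightarrow> d i (x j) = (if j = i then 1 else 0)" using d_spec by blast

lemma derivation_eqI:
  "derivation K \<delta> \<Longrightarrow> derivation K \<delta>' \<Longrightarrow> (\<And>i. i < n \<Longrightarrow> \<delta> (x i) = \<delta>' (x i)) \<Longrightarrow> \<delta> = \<delta>'"
  using derivation_exists_unique[of "\<lambda>i. \<delta>' (x i)"] by metis

lemma d_add: "d i (a + b) = d i a + d i b" using derivation_add[OF d_derivation] .
lemma d_mult: "d i (a * b) = a * d i b + b * d i a" using derivation_mult[OF d_derivation] .
lemma d_cmult: "c \<in> K \<Longrightarrow> d i (c * a) = c * d i a" using derivation_cmult[OF d_derivation] .
lemma d_zero[simp]: "d i 0 = 0" using derivation_zero[OF d_derivation] .
lemma d_one[simp]: "d i 1 = 0" using derivation_one[OF d_derivation] .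
lemma d_sum: "d i (\<Sum>j\<in>A. f j) = (\<Sum>j\<in>A. d i (f j))" using derivation_sum[OF d_derivation] .
lemma d_const: "c \<in> K \<Longrightarrow> d i c = 0" using derivation_const[OF d_derivation] .
lemma d_of_nat[simp]: "d i (of_nat m) = 0" using d_const[OF subfield_of_nat[OF subfield]] .
lemma d_of_nat_mult: "d i (of_nat m * a) = of_nat m * d i a"
  using d_cmult[OF subfield_of_nat[OF subfield]] .

text \<open>The partial derivatives commute: [\<partial>_i, \<partial>_j] is a derivation vanishing on all x_k.\<close>

lemma d_commute: "d i (d j a) = d j (d i a)"
proof -
  define \<delta> where "\<delta> = (\<lambda>a. d i (d j a) - d j (d i a))"
  have "derivation K \<delta>"
    unfolding derivation_def \<delta>_def
  proof (intro conjI allI ballI)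
    fix a b
    show "d i (d j (a + b)) - d j (d i (a + b)) = d i (d j a) - d j (d i a) + (d i (d j b) - d j (d i b))"
      by (simp add: d_add)
    show "d i (d j (a * b)) - d j (d i (a * b)) = a * (d i (d j b) - d j (d i b)) + b * (d i (d j a) - d j (d i a))"
      by (simp add: d_add d_mult algebra_simps)
  next
    fix c a assume "c \<in> K"
    then show "d i (d j (c * a)) - d j (d i (c * a)) = c * (d i (d j a) - d j (d i a))"
      by (simp add: d_cmult right_diff_distrib)
  qed
  moreover have "derivation K (\<lambda>a. 0)" by (simp add: derivation_def)
  ultimately have "\<delta> = (\<lambda>a. 0)"
    by (rule derivation_eqI) (simp add: \<delta>_def d_x)
  then show ?thesis unfolding \<delta>_def by (metis eq_iff_diff_eq_0)
qed

lemma derivation_expansion: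
  assumes "derivation K \<delta>" shows "\<delta> a = (\<Sum>i<n. \<delta> (x i) * d i a)"
proof -
  define \<delta>' where "\<delta>' = (\<lambda>a. \<Sum>i<n. \<delta> (x i) * d i a)"
  have "derivation K \<delta>'"
    unfolding derivation_def \<delta>'_def
  proof (intro conjI allI ballI)
    fix a b
    show "(\<Sum>i<n. \<delta> (x i) * d i (a + b)) = (\<Sum>i<n. \<delta> (x i) * d i a) + (\<Sum>i<n. \<delta> (x i) * d i b)"
      by (simp add: d_add algebra_simps sum.distrib)
    show "(\<Sum>i<n. \<delta> (x i) * d i (a * b)) = a * (\<Sum>i<n. \<delta> (x i) * d i b) + b * (\<Sum>i<n. \<delta> (x i) * d i a)"
      by (simp add: d_mult algebra_simps sum.distrib sum_distrib_left)
  next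
    fix c a assume "c \<in> K"
    then show "(\<Sum>i<n. \<delta> (x i) * d i (c * a)) = c * (\<Sum>i<n. \<delta> (x i) * d i a)"
      by (simp add: d_cmult sum_distrib_left mult.left_commute)
  qed
  moreover have "\<delta>' (x k) = \<delta> (x k)" if "k < n" for k
  proof -
    have "\<delta>' (x k) = (\<Sum>i<n. if i = k then \<delta> (x i) else 0)"
      unfolding \<delta>'_def using that by (intro sum.cong) (auto simp: d_x)
    then show ?thesis using that by simp
  qed
  ultimately have "\<delta> = \<delta>'" by (intro derivation_eqI[OF assms]) auto
  then show ?thesis unfolding \<delta>'_def by metis
qed

lemma in_K_if_d_zero: assumes "\<And>i. i < n \<Longrightarrow> d i a = 0" shows "a \<in> K"
proof -
  have "\<forall>\<delta>. derivation K \<delta> \<longrightarrow> \<delta> a = 0"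
    using derivation_expansion[of _ a] assms by auto
  then show ?thesis using coords unfolding coordinate_system_def by blast
qed

definition dpow_list :: "(nat \<Rightarrow>\<^sub>0 nat) \<Rightarrow> nat list \<Rightarrow> 'r \<Rightarrow> 'r" where
  "dpow_list \<alpha> js = foldr (\<lambda>i f. (d i ^^ Poly_Mapping.lookup \<alpha> i) \<circ> f) js id"

lemma dpow_list_Nil: "dpow_list \<alpha> [] = id"
  unfolding dpow_list_def by simp

lemma dpow_list_Cons: "dpow_list \<alpha> (i # js) = (d i ^^ Poly_Mapping.lookup \<alpha> i) \<circ> dpow_list \<alpha> js"
  unfolding dpow_list_def by simp

lemma dp_eq_dpow_list: "dp \<alpha> = dpow_list \<alpha> [0..<n]"
  unfolding dpow_def dpow_list_def ..

lemma dp_closure: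
  assumes "\<Phi> id" "\<And>f g. \<Phi> f \<Longrightarrow> \<Phi> g \<Longrightarrow> \<Phi> (f \<circ> g)" "\<And>i. i < n \<Longrightarrow> \<Phi> (d i)"
  shows "\<Phi> (dp \<alpha>)"
proof -
  have pow: "\<Phi> (h ^^ k)" if "\<Phi> h" for h k
    using that by (induction k) (auto intro: assms(1,2))
  have H: "set js \<subseteq> {..<n} \<Longrightarrow> \<Phi> (dpow_list \<alpha> js)" for js
    by (induction js) (auto simp: dpow_list_Nil dpow_list_Cons intro: assms pow)
  show ?thesis unfolding dp_eq_dpow_list by (rule H) auto
qed

lemma dp_add: "dp \<alpha> (a + b) = dp \<alpha> a + dp \<alpha> b"
proof -
  have "\<forall>a b. dp \<alpha> (a + b) = dp \<alpha> a + dp \<alpha> b"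
    by (rule dp_closure[where \<Phi>="\<lambda>L. \<forall>a b. L (a + b) = L a + L b"]) (simp_all add: d_add)
  then show ?thesis by blast
qed

lemma dp_zero[simp]: "dp \<alpha> 0 = 0" using dp_add[of \<alpha> 0 0] by simp

lemma dp_sum: "dp \<alpha> (\<Sum>i\<in>A. f i) = (\<Sum>i\<in>A. dp \<alpha> (f i))"
  by (induction A rule: infinite_finite_induct) (auto simp: dp_add)

text \<open>\<partial>^\<alpha> commutes with every \<partial>_j, since the \<partial>_i commute pairwise.\<close>

lemma dp_commute_d: "d j \<circ> dp \<alpha> = dp \<alpha> \<circ> d j"
proof (rule dp_closure[where \<Phi>="\<lambda>g. d j \<circ> g = g \<circ> d j"])
  show "d j \<circ> d i = d i \<circ> d j" for i by (rule ext) (simp add: d_commute[of j i])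
qed (simp_all add: comp_assoc, metis comp_assoc)

lemma dp_zero_index: "dp 0 = id"
proof -
  have "dpow_list 0 js = id" for js
    by (induction js) (simp_all add: dpow_list_Nil dpow_list_Cons)
  then show ?thesis unfolding dp_eq_dpow_list by simp
qed

lemma d_funpow_commute: "d j \<circ> (d i ^^ k) = (d i ^^ k) \<circ> d j"
proof (induction k)
  case (Suc k)
  have "d j \<circ> d i = d i \<circ> d j" by (rule ext) (simp add: d_commute[of j i])
  then show ?case using Suc.IH by (metis comp_assoc funpow.simps(2))
qed simp

lemma dpow_list_step:
  assumes "distinct js"
  shows "dpow_list (\<alpha> + unit_index j) js =
    (if j \<in> set js then d j \<circ> dpow_list \<alpha> js else dpow_list \<alpha> js)"
  using assms
proof (induction js)
  case (Cons i js)
  then have IH: "dpow_list (\<alpha> + unit_index j) js =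
      (if j \<in> set js then d j \<circ> dpow_list \<alpha> js else dpow_list \<alpha> js)"
    and i_new: "i \<notin> set js" by auto
  show ?case
  proof (cases "i = j")
    case True
    then have "dpow_list (\<alpha> + unit_index j) (i # js)
        = (d j ^^ Suc (Poly_Mapping.lookup \<alpha> j)) \<circ> dpow_list \<alpha> js"
      using IH i_new by (simp add: dpow_list_Cons lookup_add)
    also have "\<dots> = d j \<circ> dpow_list \<alpha> (i # js)"
      using True by (simp add: dpow_list_Cons comp_assoc)
    finally show ?thesis using True by simp
  next
    case False
    then have lookup_eq: "Poly_Mapping.lookup (\<alpha> + unit_index j) i = Poly_Mapping.lookup \<alpha> i"
      by (simp add: lookup_add)
    show ?thesis
    proof (cases "j \<in> set js")
      case True
      have "dpow_list (\<alpha> + unit_index j) (i # js)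
          = (d i ^^ Poly_Mapping.lookup \<alpha> i) \<circ> (d j \<circ> dpow_list \<alpha> js)"
        using IH True by (simp only: dpow_list_Cons lookup_eq if_True)
      also have "\<dots> = d j \<circ> ((d i ^^ Poly_Mapping.lookup \<alpha> i) \<circ> dpow_list \<alpha> js)"
        by (simp only: comp_assoc[symmetric] d_funpow_commute[symmetric])
      also have "\<dots> = d j \<circ> dpow_list \<alpha> (i # js)"
        by (simp only: dpow_list_Cons)
      finally show ?thesis using True by simp
    next
      case False
      then show ?thesis using IH \<open>i \<noteq> j\<close>
        by (simp only: dpow_list_Cons lookup_eq if_False) simp
    qed
  qed
qed (simp add: dpow_list_Nil)

lemma dp_step: "j < n \<Longrightarrow> dp (\<alpha> + unit_index j) = d j \<circ> dp \<alpha>"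
  using dpow_list_step[of "[0..<n]" \<alpha> j] unfolding dp_eq_dpow_list by simp

lemma dp_index_add: "multi_index n \<beta> \<Longrightarrow> dp (\<alpha> + \<beta>) = dp \<alpha> \<circ> dp \<beta>"
proof (induction \<beta> rule: multi_index_induct)
  case zero then show ?case by (simp add: dp_zero_index)
next
  case (step \<beta> j)
  have "dp (\<alpha> + (\<beta> + unit_index j)) = d j \<circ> (dp \<alpha> \<circ> dp \<beta>)"
    using step dp_step[of j "\<alpha> + \<beta>"] by (simp add: add.assoc comp_def)
  also have "\<dots> = dp \<alpha> \<circ> (d j \<circ> dp \<beta>)"
    by (metis comp_assoc dp_commute_d)
  finally show ?case using dp_step[OF step(1)] by simp
qed

lemma dp_one: "multi_index n \<alpha> \<Longrightarrow> \<alpha> \<noteq> 0 \<Longrightarrow> dp \<alpha> 1 = 0"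
proof (induction \<alpha> rule: multi_index_induct)
  case (step \<beta> j)
  then show ?case
    using dp_step[of j 0] dp_step[of j \<beta>] by (cases "\<beta> = 0") (simp_all add: dp_zero_index)
qed simp

end

lemma valid_symbol_iff: "valid_symbol n c \<longleftrightarrow> (\<forall>\<alpha>\<in>Poly_Mapping.keys c. multi_index n \<alpha>)"
  unfolding valid_symbol_def multi_index_def ..

lemma valid_add: "valid_symbol n c \<Longrightarrow> valid_symbol n c' \<Longrightarrow> valid_symbol n (c + c')"
  unfolding valid_symbol_def using keys_add[of c c'] by blast

lemma valid_uminus: "valid_symbol n c \<Longrightarrow> valid_symbol n (- c)"
  unfolding valid_symbol_def by (simp add: in_keys_iff)

lemma valid_diff: "valid_symbol n c \<Longrightarrow> valid_symbol n c' \<Longrightarrow> valid_symbol n (c - c')"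
  using valid_add[of n c "- c'"] valid_uminus[of n c'] by simp

lemma valid_sum: "(\<And>i. i \<in> A \<Longrightarrow> valid_symbol n (c i)) \<Longrightarrow> valid_symbol n (\<Sum>i\<in>A. c i)"
  by (induction A rule: infinite_finite_induct) (auto intro: valid_add simp: valid_symbol_def[of n 0])

lemma valid_mult: "valid_symbol n f \<Longrightarrow> valid_symbol n g \<Longrightarrow> valid_symbol n (f * g)"
  unfolding valid_symbol_iff using keys_mult[of f g] multi_index_add by blast

lemma lookup_mult_keys:
  "Poly_Mapping.lookup (f * g) \<gamma> = (\<Sum>l\<in>Poly_Mapping.keys f. \<Sum>r\<in>Poly_Mapping.keys g.
      if \<gamma> = l + r then Poly_Mapping.lookup f l * Poly_Mapping.lookup g r else (0::'a::comm_ring_1))"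
proof -
  have inner: "(\<Sum>q. Poly_Mapping.lookup g q when \<gamma> = l + q) =
      (\<Sum>r\<in>Poly_Mapping.keys g. Poly_Mapping.lookup g r when \<gamma> = l + r)" for l
    by (rule Sum_any.expand_superset) (auto simp: in_keys_iff)
  have "Poly_Mapping.lookup (f * g) \<gamma> = (\<Sum>l. Poly_Mapping.lookup f l *
      (\<Sum>r\<in>Poly_Mapping.keys g. Poly_Mapping.lookup g r when \<gamma> = l + r))"
    by (simp add: lookup_mult inner)
  also have "\<dots> = (\<Sum>l\<in>Poly_Mapping.keys f. Poly_Mapping.lookup f l *
      (\<Sum>r\<in>Poly_Mapping.keys g. Poly_Mapping.lookup g r when \<gamma> = l + r))"
    by (rule Sum_any.expand_superset) (auto simp: in_keys_iff)
  also have "\<dots> = (\<Sum>l\<in>Poly_Mapping.keys f. \<Sum>r\<in>Poly_Mapping.keys g.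
      if \<gamma> = l + r then Poly_Mapping.lookup f l * Poly_Mapping.lookup g r else 0)"
    by (auto simp: sum_distrib_left when_def intro!: sum.cong)
  finally show ?thesis .
qed

lemma lookup_mult_eq_zero:
  assumes "\<And>l r. l \<in> Poly_Mapping.keys f \<Longrightarrow> r \<in> Poly_Mapping.keys g \<Longrightarrow> \<gamma> \<noteq> l + r"
  shows "Poly_Mapping.lookup (f * g) \<gamma> = 0"
proof -
  have "\<gamma> \<notin> Poly_Mapping.keys (f * g)" using keys_mult[of f g] assms by blast
  then show ?thesis by (simp add: in_keys_iff)
qed

lemma lookup_pderiv_xi:
  "Poly_Mapping.lookup (pderiv_xi j c) \<beta> =
     of_nat (Poly_Mapping.lookup \<beta> j + 1) * Poly_Mapping.lookup c (\<beta> + unit_index j)"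
proof -
  let ?S = "{\<beta>. of_nat (Poly_Mapping.lookup \<beta> j + 1) * Poly_Mapping.lookup c (\<beta> + unit_index j) \<noteq> 0}"
  have "?S \<subseteq> (\<lambda>\<alpha>. \<alpha> - unit_index j) ` Poly_Mapping.keys c"
  proof
    fix \<beta> assume "\<beta> \<in> ?S"
    then have "\<beta> + unit_index j \<in> Poly_Mapping.keys c" by (auto simp: in_keys_iff)
    moreover have "\<beta> = (\<beta> + unit_index j) - unit_index j" by simp
    ultimately show "\<beta> \<in> (\<lambda>\<alpha>. \<alpha> - unit_index j) ` Poly_Mapping.keys c" by blast
  qed
  then have "finite ?S" by (rule finite_subset) simp
  then show ?thesis unfolding pderiv_xi_def unit_index_def[symmetric] by simp
qed

lemma keys_pderiv_xi:
  "l \<in> Poly_Mapping.keys (pderiv_xi j c) \<Longrightarrow> l + unit_index j \<in> Poly_Mapping.keys c"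
  by (auto simp: in_keys_iff lookup_pderiv_xi)

lemma valid_pderiv: "valid_symbol n c \<Longrightarrow> valid_symbol n (pderiv_xi j c)"
  unfolding valid_symbol_iff using keys_pderiv_xi multi_index_add by blast

lemma pderiv_add: "pderiv_xi j (f + g) = pderiv_xi j f + pderiv_xi j g"
  by (intro poly_mapping_eqI) (simp add: lookup_pderiv_xi lookup_add distrib_left)

lemma sum_keys_pderiv_xi:
  "(\<Sum>l\<in>Poly_Mapping.keys (pderiv_xi j c). Poly_Mapping.lookup (pderiv_xi j c) l * \<Phi> l) =
   (\<Sum>\<alpha>\<in>Poly_Mapping.keys c.
      of_nat (Poly_Mapping.lookup \<alpha> j) * Poly_Mapping.lookup c \<alpha> * \<Phi> (\<alpha> - unit_index j))"
proof -
  let ?A = "{\<alpha>\<in>Poly_Mapping.keys c. Poly_Mapping.lookup \<alpha> j > 0}"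
  have inj: "inj_on (\<lambda>\<alpha>. \<alpha> - unit_index j) ?A"
    by (intro inj_onI) (metis (no_types, lifting) mem_Collect_eq minus_unit_index_add)
  have "Poly_Mapping.keys (pderiv_xi j c) \<subseteq> (\<lambda>\<alpha>. \<alpha> - unit_index j) ` ?A"
  proof
    fix \<beta> assume "\<beta> \<in> Poly_Mapping.keys (pderiv_xi j c)"
    then have "\<beta> + unit_index j \<in> ?A" using keys_pderiv_xi by (simp add: lookup_add)
    moreover have "\<beta> = (\<beta> + unit_index j) - unit_index j" by simp
    ultimately show "\<beta> \<in> (\<lambda>\<alpha>. \<alpha> - unit_index j) ` ?A" by blast
  qed
  then have "(\<Sum>l\<in>Poly_Mapping.keys (pderiv_xi j c). Poly_Mapping.lookup (pderiv_xi j c) l * \<Phi> l)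
     = (\<Sum>\<beta>\<in>(\<lambda>\<alpha>. \<alpha> - unit_index j) ` ?A. Poly_Mapping.lookup (pderiv_xi j c) \<beta> * \<Phi> \<beta>)"
    by (intro sum.mono_neutral_left) (auto simp: in_keys_iff)
  also have "\<dots> = (\<Sum>\<alpha>\<in>?A. Poly_Mapping.lookup (pderiv_xi j c) (\<alpha> - unit_index j) * \<Phi> (\<alpha> - unit_index j))"
    by (rule sum.reindex[OF inj, unfolded comp_def])
  also have "\<dots> = (\<Sum>\<alpha>\<in>?A. of_nat (Poly_Mapping.lookup \<alpha> j) * Poly_Mapping.lookup c \<alpha> * \<Phi> (\<alpha> - unit_index j))"
  proof (rule sum.cong[OF refl])
    fix \<alpha> assume "\<alpha> \<in> ?A"
    then have pos: "Poly_Mapping.lookup \<alpha> j > 0" by simp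
    then have "Poly_Mapping.lookup (\<alpha> - unit_index j) j + 1 = Poly_Mapping.lookup \<alpha> j"
      by (simp add: lookup_minus)
    then show "Poly_Mapping.lookup (pderiv_xi j c) (\<alpha> - unit_index j) * \<Phi> (\<alpha> - unit_index j) =
       of_nat (Poly_Mapping.lookup \<alpha> j) * Poly_Mapping.lookup c \<alpha> * \<Phi> (\<alpha> - unit_index j)"
      by (simp add: lookup_pderiv_xi minus_unit_index_add[OF pos])
  qed
  also have "\<dots> = (\<Sum>\<alpha>\<in>Poly_Mapping.keys c.
      of_nat (Poly_Mapping.lookup \<alpha> j) * Poly_Mapping.lookup c \<alpha> * \<Phi> (\<alpha> - unit_index j))"
    by (rule sum.mono_neutral_left) auto
  finally show ?thesis .
qed

text \<open>The product rule for \<partial>^\<alpha> produces index shifts \<beta> + e_k - e_j; this identity rewrites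
  them (for the coefficient |\<beta> + e_k|_j that the product rule attaches).\<close>

lemma index_shift:
  fixes F :: "(nat \<Rightarrow>\<^sub>0 nat) \<Rightarrow> 'a::comm_semiring_1"
  shows "of_nat (Poly_Mapping.lookup (\<beta> + unit_index k) j) * F (\<beta> + unit_index k - unit_index j)
    = (if j = k then F \<beta> else 0) + of_nat (Poly_Mapping.lookup \<beta> j) * F (\<beta> - unit_index j + unit_index k)"
proof (cases "j = k")
  case True
  show ?thesis
  proof (cases "Poly_Mapping.lookup \<beta> j > 0")
    case True
    then have "\<beta> - unit_index j + unit_index k = \<beta>" using \<open>j = k\<close> minus_unit_index_add by simp
    then show ?thesis using \<open>j = k\<close> by (simp add: lookup_add algebra_simps)
  next
    case False
    then show ?thesis using \<open>j = k\<close> by (simp add: lookup_add)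
  qed
next
  case False
  have "\<beta> - unit_index j + unit_index k = \<beta> + unit_index k - unit_index j"
    using False by (intro poly_mapping_eqI) (auto simp: lookup_add lookup_minus)
  then show ?thesis using False by (simp add: lookup_add)
qed

section \<open>Differential operators and their full symbols\<close>

context coordinates
begin

abbreviation "op \<equiv> op_of K n x"

lemma op_superset:
  "finite S \<Longrightarrow> Poly_Mapping.keys c \<subseteq> S \<Longrightarrow> op c f = (\<Sum>\<alpha>\<in>S. Poly_Mapping.lookup c \<alpha> * dp \<alpha> f)"
  unfolding op_of_def by (rule sum.mono_neutral_left) (auto simp: in_keys_iff)

lemma op_add: "op (c + c') f = op c f + op c' f"
proof -
  let ?S = "Poly_Mapping.keys c \<union> Poly_Mapping.keys c'"
  have "op (c + c') f = (\<Sum>\<alpha>\<in>?S. Poly_Mapping.lookup (c + c') \<alpha> * dp \<alpha> f)"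
    by (rule op_superset) (use keys_add[of c c'] in auto)
  also have "\<dots> = (\<Sum>\<alpha>\<in>?S. Poly_Mapping.lookup c \<alpha> * dp \<alpha> f)
      + (\<Sum>\<alpha>\<in>?S. Poly_Mapping.lookup c' \<alpha> * dp \<alpha> f)"
    by (simp add: lookup_add sum.distrib distrib_right)
  also have "\<dots> = op c f + op c' f" using op_superset[of ?S c f] op_superset[of ?S c' f] by simp
  finally show ?thesis .
qed

lemma op_zero[simp]: "op 0 f = 0"
  unfolding op_of_def by simp

lemma op_uminus: "op (- c) f = - op c f"
  using op_add[of c "- c" f] by (simp add: op_of_def eq_neg_iff_add_eq_0 add.commute)

lemma op_diff: "op (c - c') f = op c f - op c' f"
  using op_add[of c "- c'" f] op_uminus[of c' f] by simp

lemma op_sum: "op (\<Sum>i\<in>A. c i) f = (\<Sum>i\<in>A. op (c i) f)"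
  by (induction A rule: infinite_finite_induct) (auto simp: op_add)

lemma op_sum_arg: "op c (\<Sum>i\<in>A. g i) = (\<Sum>i\<in>A. op c (g i))"
  unfolding op_of_def by (simp add: dp_sum sum_distrib_left sum.swap[of _ A])

lemma op_single: "op (Poly_Mapping.single \<alpha> a) f = a * dp \<alpha> f"
  by (subst op_superset[of "{\<alpha>}"]) (auto simp: lookup_single)

lemma op_pderiv_xi:
  "op (pderiv_xi j c) f = (\<Sum>\<alpha>\<in>Poly_Mapping.keys c.
     of_nat (Poly_Mapping.lookup \<alpha> j) * Poly_Mapping.lookup c \<alpha> * dp (\<alpha> - unit_index j) f)"
  unfolding op_of_def by (rule sum_keys_pderiv_xi)

lemma dp_mult_x:
  assumes "multi_index n \<alpha>" "j < n"
  shows "dp \<alpha> (x j * f)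
    = x j * dp \<alpha> f + of_nat (Poly_Mapping.lookup \<alpha> j) * dp (\<alpha> - unit_index j) f"
  using assms(1)
proof (induction \<alpha> rule: multi_index_induct)
  case zero then show ?case by (simp add: dp_zero_index)
next
  case (step \<beta> k)
  have "dp (\<beta> + unit_index k) (x j * f) = d k (dp \<beta> (x j * f))" by (simp add: dp_step[OF step(1)])
  also have "\<dots> = x j * d k (dp \<beta> f) + dp \<beta> f * d k (x j)
      + of_nat (Poly_Mapping.lookup \<beta> j) * d k (dp (\<beta> - unit_index j) f)"
    using step(3) by (simp add: d_add d_mult d_of_nat_mult)
  also have "\<dots> = x j * dp (\<beta> + unit_index k) f + (if j = k then dp \<beta> f else 0)
      + of_nat (Poly_Mapping.lookup \<beta> j) * dp (\<beta> - unit_index j + unit_index k) f"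
    using assms(2) step(1) by (simp add: d_x dp_step)
  also have "\<dots> = x j * dp (\<beta> + unit_index k) f + of_nat (Poly_Mapping.lookup (\<beta> + unit_index k) j)
      * dp (\<beta> + unit_index k - unit_index j) f"
    using index_shift[of \<beta> k j "\<lambda>\<gamma>. dp \<gamma> f"] by (simp add: add.assoc)
  finally show ?case .
qed

text \<open>Hence [op c, x_j] = op (\<partial>c/\<partial>\<xi>_j): commuting with a coordinate differentiates the symbol in \<xi>.\<close>

lemma op_mult_x:
  assumes "valid_symbol n c" "j < n"
  shows "op c (x j * f) = x j * op c f + op (pderiv_xi j c) f"
proof -
  have "op c (x j * f) = (\<Sum>\<alpha>\<in>Poly_Mapping.keys c. Poly_Mapping.lookup c \<alpha> *
     (x j * dp \<alpha> f + of_nat (Poly_Mapping.lookup \<alpha> j) * dp (\<alpha> - unit_index j) f))"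
    unfolding op_of_def using assms by (intro sum.cong refl) (auto simp: dp_mult_x valid_symbol_iff)
  also have "\<dots> = x j * op c f + op (pderiv_xi j c) f"
    unfolding op_pderiv_xi by (simp add: op_of_def algebra_simps sum.distrib sum_distrib_left)
  finally show ?thesis .
qed

lemma op_one: "valid_symbol n c \<Longrightarrow> op c 1 = Poly_Mapping.lookup c 0"
proof -
  assume "valid_symbol n c"
  then have "op c 1 = (\<Sum>\<alpha>\<in>Poly_Mapping.keys c. if \<alpha> = 0 then Poly_Mapping.lookup c \<alpha> else 0)"
    unfolding op_of_def by (intro sum.cong refl) (auto simp: dp_zero_index dp_one valid_symbol_iff)
  then show ?thesis by (simp add: sum.delta in_keys_iff)
qed

text \<open>By induction on
  the degree: the constant term is op c 1, and op c = 0 implies op (\<partial>c/\<partial>\<xi>_j) = 0, whose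
  coefficients are those of c multiplied by nonzero integers (characteristic zero).\<close>

lemma op_zero_coeff:
  assumes "valid_symbol n c" "op c = (\<lambda>f. 0)"
  shows "Poly_Mapping.lookup c \<gamma> = 0"
  using assms
proof (induction "total_deg \<gamma>" arbitrary: \<gamma> c)
  case 0
  then show ?case using op_one[of c] by (simp add: total_deg_eq_0_iff fun_eq_iff)
next
  case (Suc m)
  show ?case
  proof (cases "multi_index n \<gamma>")
    case False
    then show ?thesis using Suc.prems(1) by (auto simp: valid_symbol_iff in_keys_iff)
  next
    case True
    have "\<gamma> \<noteq> 0" using Suc.hyps(2) by (auto simp: total_deg_eq_0_iff[symmetric])
    then obtain j where "j \<in> Poly_Mapping.keys \<gamma>"
      by (metis keys_zero lookup_zero not_in_keys_iff_lookup_eq_zero poly_mapping_eqI)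
    then have pos: "Poly_Mapping.lookup \<gamma> j > 0" by (simp add: in_keys_iff)
    have "j < n" using True \<open>j \<in> Poly_Mapping.keys \<gamma>\<close> unfolding multi_index_def by blast
    define \<beta> where "\<beta> = \<gamma> - unit_index j"
    have \<gamma>_eq: "\<gamma> = \<beta> + unit_index j" unfolding \<beta>_def by (simp add: minus_unit_index_add[OF pos])
    have "op (pderiv_xi j c) = (\<lambda>f. 0)"
      using op_mult_x[OF Suc.prems(1) \<open>j < n\<close>] Suc.prems(2) by (auto simp: fun_eq_iff)
    then have "Poly_Mapping.lookup (pderiv_xi j c) \<beta> = 0"
      using Suc.hyps(1)[of \<beta>] Suc.hyps(2) valid_pderiv[OF Suc.prems(1)] \<gamma>_eq by simp
    then have "of_nat (Poly_Mapping.lookup \<beta> j + 1) * Poly_Mapping.lookup c \<gamma> = 0"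
      by (simp add: lookup_pderiv_xi \<gamma>_eq)
    then show ?thesis by (rule subfield_of_nat_cancel[OF subfield, rotated]) simp
  qed
qed

lemma op_inj: "valid_symbol n c \<Longrightarrow> valid_symbol n c' \<Longrightarrow> op c = op c' \<Longrightarrow> c = c'"
  using op_zero_coeff[of "c - c'"]
  by (intro poly_mapping_eqI) (auto simp: valid_diff op_diff fun_eq_iff lookup_minus)

lemma full_symbol_op: "valid_symbol n c \<Longrightarrow> full_symbol K n x (op c) = c"
  unfolding full_symbol_def by (rule the_equality) (auto intro: op_inj)

text \<open>\<open>lower_order m L\<close>: L is a differential operator all of whose terms have order < m.
  The symbol calculus below is phrased as congruences modulo such operators.\<close>

definition lower_order :: "nat \<Rightarrow> ('r \<Rightarrow> 'r) \<Rightarrow> bool" where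
  "lower_order m L \<longleftrightarrow>
     (\<exists>c. valid_symbol n c \<and> (\<forall>\<alpha>\<in>Poly_Mapping.keys c. total_deg \<alpha> < m) \<and> L = op c)"

text \<open>By uniqueness of symbols, an operator of order < m has no coefficient of degree \<ge> m.\<close>

lemma lower_order_coeff:
  assumes "valid_symbol n c" "lower_order m (op c)" "total_deg \<gamma> \<ge> m"
  shows "Poly_Mapping.lookup c \<gamma> = 0"
proof -
  obtain e where e: "valid_symbol n e" "\<forall>\<alpha>\<in>Poly_Mapping.keys e. total_deg \<alpha> < m" "op c = op e"
    using assms(2) unfolding lower_order_def by blast
  have "c = e" using op_inj[OF assms(1) e(1) e(3)] .
  then show ?thesis using e(2) assms(3) by (metis in_keys_iff not_le)
qed

lemma lower_order_zero: "lower_order m (\<lambda>f. 0)"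
  unfolding lower_order_def by (intro exI[of _ 0]) (auto simp: fun_eq_iff valid_symbol_def)

lemma lower_order_0: "lower_order 0 L \<Longrightarrow> L = (\<lambda>f. 0)"
  unfolding lower_order_def by (auto simp: op_of_def fun_eq_iff)

lemma lower_order_cong: "lower_order m A \<Longrightarrow> (\<And>f. A f = B f) \<Longrightarrow> lower_order m B"
  by (metis ext)

lemma lower_order_mono: "lower_order m L \<Longrightarrow> m \<le> m' \<Longrightarrow> lower_order m' L"
  unfolding lower_order_def using order_less_le_trans by blast

lemma lower_order_add:
  assumes "lower_order m A" "lower_order m B" shows "lower_order m (\<lambda>f. A f + B f)"
proof -
  obtain a b where a: "valid_symbol n a" "\<forall>\<alpha>\<in>Poly_Mapping.keys a. total_deg \<alpha> < m" "A = op a"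
    and b: "valid_symbol n b" "\<forall>\<alpha>\<in>Poly_Mapping.keys b. total_deg \<alpha> < m" "B = op b"
    using assms unfolding lower_order_def by blast
  show ?thesis unfolding lower_order_def
    by (intro exI[of _ "a + b"]) (use a b keys_add[of a b] in \<open>auto simp: valid_add op_add fun_eq_iff\<close>)
qed

lemma lower_order_uminus: assumes "lower_order m A" shows "lower_order m (\<lambda>f. - A f)"
proof -
  obtain a where a: "valid_symbol n a" "\<forall>\<alpha>\<in>Poly_Mapping.keys a. total_deg \<alpha> < m" "A = op a"
    using assms unfolding lower_order_def by blast
  show ?thesis unfolding lower_order_def
    by (intro exI[of _ "- a"]) (use a in \<open>auto simp: valid_uminus op_uminus fun_eq_iff in_keys_iff\<close>)
qed

lemma lower_order_diff: "lower_order m A \<Longrightarrow> lower_order m B \<Longrightarrow> lower_order m (\<lambda>f. A f - B f)"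
  using lower_order_add[of m A "\<lambda>f. - B f"] lower_order_uminus[of m B] by simp

lemma lower_order_sum:
  "(\<And>i. i \<in> I \<Longrightarrow> lower_order m (F i)) \<Longrightarrow> lower_order m (\<lambda>f. \<Sum>i\<in>I. F i f)"
proof (induction I rule: infinite_finite_induct)
  case (insert i I)
  then show ?case using lower_order_add[of m "F i" "\<lambda>f. \<Sum>i\<in>I. F i f"] by simp
qed (auto intro: lower_order_zero)

lemma lower_order_term:
  assumes "multi_index n \<alpha>" "total_deg \<alpha> < m" shows "lower_order m (\<lambda>f. a * dp \<alpha> f)"
proof -
  have "lower_order m (op (Poly_Mapping.single \<alpha> a))"
    unfolding lower_order_def using assms
    by (intro exI[of _ "Poly_Mapping.single \<alpha> a"]) (auto simp: valid_symbol_def multi_index_def)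
  then show ?thesis by (rule lower_order_cong) (simp add: op_single)
qed

lemma lower_order_expansion:
  "lower_order m L \<Longrightarrow> \<exists>c. valid_symbol n c \<and> (\<forall>\<alpha>\<in>Poly_Mapping.keys c. total_deg \<alpha> < m) \<and>
     (\<forall>f. L f = (\<Sum>\<alpha>\<in>Poly_Mapping.keys c. Poly_Mapping.lookup c \<alpha> * dp \<alpha> f))"
  unfolding lower_order_def op_of_def by auto

lemma lower_order_scale: assumes "lower_order m L" shows "lower_order m (\<lambda>f. r * L f)"
proof -
  obtain c where c: "valid_symbol n c" "\<forall>\<alpha>\<in>Poly_Mapping.keys c. total_deg \<alpha> < m"
     "\<And>f. L f = (\<Sum>\<alpha>\<in>Poly_Mapping.keys c. Poly_Mapping.lookup c \<alpha> * dp \<alpha> f)"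
    using lower_order_expansion[OF assms] by blast
  have "lower_order m (\<lambda>f. \<Sum>\<alpha>\<in>Poly_Mapping.keys c. (r * Poly_Mapping.lookup c \<alpha>) * dp \<alpha> f)"
    using c(1,2) by (intro lower_order_sum lower_order_term) (auto simp: valid_symbol_iff)
  then show ?thesis by (rule lower_order_cong) (simp add: c(3) sum_distrib_left mult.assoc)
qed

lemma lower_order_d:
  assumes "lower_order (m - 1) L" "i < n" shows "lower_order m (\<lambda>f. d i (L f))"
proof (cases "m = 0")
  case True
  then have "L = (\<lambda>f. 0)" using assms(1) lower_order_0 by simp
  then show ?thesis by (simp add: lower_order_zero)
next
  case False
  obtain c where c: "valid_symbol n c" "\<forall>\<alpha>\<in>Poly_Mapping.keys c. total_deg \<alpha> < m - 1"
     "\<And>f. L f = (\<Sum>\<alpha>\<in>Poly_Mapping.keys c. Poly_Mapping.lookup c \<alpha> * dp \<alpha> f)"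
    using lower_order_expansion[OF assms(1)] by blast
  have "lower_order m (\<lambda>f. \<Sum>\<alpha>\<in>Poly_Mapping.keys c.
      Poly_Mapping.lookup c \<alpha> * dp (\<alpha> + unit_index i) f + d i (Poly_Mapping.lookup c \<alpha>) * dp \<alpha> f)"
    using c(1,2) assms(2) False
    by (intro lower_order_sum lower_order_add lower_order_term)
       (auto simp: valid_symbol_iff multi_index_add multi_index_unit)
  then show ?thesis
    by (rule lower_order_cong) (simp add: c(3) d_sum d_mult dp_step[OF assms(2)] algebra_simps)
qed

lemma lower_order_dp_right:
  assumes "lower_order m L" "multi_index n \<beta>"
  shows "lower_order (m + total_deg \<beta>) (\<lambda>f. L (dp \<beta> f))"
proof -
  obtain c where c: "valid_symbol n c" "\<forall>\<alpha>\<in>Poly_Mapping.keys c. total_deg \<alpha> < m"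
     "\<And>f. L f = (\<Sum>\<alpha>\<in>Poly_Mapping.keys c. Poly_Mapping.lookup c \<alpha> * dp \<alpha> f)"
    using lower_order_expansion[OF assms(1)] by blast
  have "lower_order (m + total_deg \<beta>)
      (\<lambda>f. \<Sum>\<alpha>\<in>Poly_Mapping.keys c. Poly_Mapping.lookup c \<alpha> * dp (\<alpha> + \<beta>) f)"
    using c(1,2) assms(2) by (intro lower_order_sum lower_order_term) (auto simp: valid_symbol_iff multi_index_add)
  then show ?thesis by (rule lower_order_cong) (simp add: c(3) dp_index_add[OF assms(2)])
qed

section \<open>The Leibniz rule\<close>

text \<open>The first-order part of \<partial>^\<alpha>(b f) - b \<partial>^\<alpha> f, namely  \<Sum>_j \<alpha>_j \<partial>_j(b) \<partial>^(\<alpha>-e_j) f.\<close>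

definition leibniz_sum :: "(nat \<Rightarrow>\<^sub>0 nat) \<Rightarrow> 'r \<Rightarrow> 'r \<Rightarrow> 'r" where
  "leibniz_sum \<alpha> b f =
     (\<Sum>j<n. of_nat (Poly_Mapping.lookup \<alpha> j) * d j b * dp (\<alpha> - unit_index j) f)"

lemma leibniz_sum_step:
  assumes "k < n"
  shows "leibniz_sum (\<beta> + unit_index k) b f
    = dp \<beta> f * d k b + (\<Sum>j<n. of_nat (Poly_Mapping.lookup \<beta> j) * d j b
        * dp (\<beta> - unit_index j + unit_index k) f)"
proof -
  have "of_nat (Poly_Mapping.lookup (\<beta> + unit_index k) j) * d j b * dp (\<beta> + unit_index k - unit_index j) f
      = (if j = k then dp \<beta> f * d k b else 0)
        + of_nat (Poly_Mapping.lookup \<beta> j) * d j b * dp (\<beta> - unit_index j + unit_index k) f" for j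
    using index_shift[of \<beta> k j "\<lambda>\<gamma>. d j b * dp \<gamma> f"] by (simp add: mult_ac)
  then show ?thesis unfolding leibniz_sum_def using assms by (simp add: sum.distrib)
qed

lemma lower_order_lowered_terms:
  assumes "multi_index n \<beta>"
  shows "lower_order (total_deg \<beta>)
    (\<lambda>f. \<Sum>j<n. (of_nat (Poly_Mapping.lookup \<beta> j) * c j) * dp (\<beta> - unit_index j) f)"
proof (intro lower_order_sum)
  fix j
  show "lower_order (total_deg \<beta>)
      (\<lambda>f. (of_nat (Poly_Mapping.lookup \<beta> j) * c j) * dp (\<beta> - unit_index j) f)"
  proof (cases "Poly_Mapping.lookup \<beta> j > 0")
    case True
    have "total_deg (\<beta> - unit_index j) < total_deg \<beta>"
      using arg_cong[OF minus_unit_index_add[OF True], of total_deg] by simp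
    then show ?thesis by (intro lower_order_term multi_index_minus assms)
  qed (simp add: lower_order_zero)
qed

lemma leibniz:
  assumes "multi_index n \<alpha>"
  shows "lower_order (total_deg \<alpha> - 1) (\<lambda>f. dp \<alpha> (b * f) - b * dp \<alpha> f - leibniz_sum \<alpha> b f)"
  using assms
proof (induction \<alpha> rule: multi_index_induct)
  case zero
  show ?case by (rule lower_order_cong[OF lower_order_zero]) (simp add: dp_zero_index leibniz_sum_def)
next
  case (step \<beta> k)
  define E where "E = (\<lambda>f. dp \<beta> (b * f) - b * dp \<beta> f - leibniz_sum \<beta> b f)"
  define A where "A = (\<lambda>f. \<Sum>j<n. (of_nat (Poly_Mapping.lookup \<beta> j) * d k (d j b))
      * dp (\<beta> - unit_index j) f)"
  have IH: "lower_order (total_deg \<beta> - 1) E" using step(3) unfolding E_def .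
  have dk: "d k (dp \<gamma> g) = dp (\<gamma> + unit_index k) g" for \<gamma> g using dp_step[OF step(1)] by simp
  have A_order: "lower_order (total_deg \<beta>) A"
    unfolding A_def by (rule lower_order_lowered_terms[OF step(2)])
  have dE_order: "lower_order (total_deg \<beta>) (\<lambda>f. d k (E f))"
    by (rule lower_order_d[OF IH step(1)])
  have dS: "d k (leibniz_sum \<beta> b f) = (\<Sum>j<n. of_nat (Poly_Mapping.lookup \<beta> j) * d j b
      * dp (\<beta> - unit_index j + unit_index k) f) + A f" for f
    unfolding leibniz_sum_def A_def by (simp add: d_sum d_mult d_of_nat_mult dk algebra_simps sum.distrib)
  show ?case
  proof (rule lower_order_cong[where A="\<lambda>f. A f + d k (E f)"])
    show "lower_order (total_deg (\<beta> + unit_index k) - 1) (\<lambda>f. A f + d k (E f))"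
      using lower_order_add[OF A_order dE_order] by simp
  next
    fix f
    have "dp (\<beta> + unit_index k) (b * f) = d k (b * dp \<beta> f + leibniz_sum \<beta> b f + E f)"
      by (simp add: dp_step[OF step(1)] E_def)
    also have "\<dots> = b * dp (\<beta> + unit_index k) f + dp \<beta> f * d k b
        + d k (leibniz_sum \<beta> b f) + d k (E f)"
      by (simp add: d_add d_mult dk)
    finally show "A f + d k (E f) = dp (\<beta> + unit_index k) (b * f) - b * dp (\<beta> + unit_index k) f
        - leibniz_sum (\<beta> + unit_index k) b f"
      unfolding leibniz_sum_step[OF step(1)] dS by simp
  qed
qed

section \<open>The commutator formula\<close>

definition xderiv :: "nat \<Rightarrow> ((nat \<Rightarrow>\<^sub>0 nat) \<Rightarrow>\<^sub>0 'r) \<Rightarrow> ((nat \<Rightarrow>\<^sub>0 nat) \<Rightarrow>\<^sub>0 'r)" where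
  "xderiv j c = Abs_poly_mapping (\<lambda>\<alpha>. d j (Poly_Mapping.lookup c \<alpha>))"

lemma lookup_xderiv: "Poly_Mapping.lookup (xderiv j c) \<alpha> = d j (Poly_Mapping.lookup c \<alpha>)"
proof -
  have "{\<alpha>. d j (Poly_Mapping.lookup c \<alpha>) \<noteq> 0} \<subseteq> Poly_Mapping.keys c"
    by (auto simp: in_keys_iff)
  then have "finite {\<alpha>. d j (Poly_Mapping.lookup c \<alpha>) \<noteq> 0}" by (rule finite_subset) simp
  then show ?thesis unfolding xderiv_def by simp
qed

lemma keys_xderiv: "Poly_Mapping.keys (xderiv j c) \<subseteq> Poly_Mapping.keys c"
  by (auto simp: in_keys_iff lookup_xderiv)

lemma valid_xderiv: "valid_symbol n c \<Longrightarrow> valid_symbol n (xderiv j c)"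
  unfolding valid_symbol_def using keys_xderiv by blast

lemma xderiv_add: "xderiv j (f + g) = xderiv j f + xderiv j g"
  by (intro poly_mapping_eqI) (simp add: lookup_xderiv lookup_add d_add)

lemma xderiv_const: "(\<And>\<alpha>. Poly_Mapping.lookup c \<alpha> \<in> K) \<Longrightarrow> xderiv j c = 0"
  by (intro poly_mapping_eqI) (simp add: lookup_xderiv d_const)

definition poisson_bracket ::
    "((nat \<Rightarrow>\<^sub>0 nat) \<Rightarrow>\<^sub>0 'r) \<Rightarrow> ((nat \<Rightarrow>\<^sub>0 nat) \<Rightarrow>\<^sub>0 'r) \<Rightarrow> ((nat \<Rightarrow>\<^sub>0 nat) \<Rightarrow>\<^sub>0 'r)" where
  "poisson_bracket p q = (\<Sum>j<n. pderiv_xi j p * xderiv j q - pderiv_xi j q * xderiv j p)"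

lemma valid_poisson_bracket:
  "valid_symbol n p \<Longrightarrow> valid_symbol n q \<Longrightarrow> valid_symbol n (poisson_bracket p q)"
  unfolding poisson_bracket_def
  by (intro valid_sum valid_diff valid_mult valid_pderiv valid_xderiv)

lemma op_mult:
  "op (f * g) h = (\<Sum>l\<in>Poly_Mapping.keys f. \<Sum>r\<in>Poly_Mapping.keys g.
      Poly_Mapping.lookup f l * Poly_Mapping.lookup g r * dp (l + r) h)"
proof -
  define S where "S = (\<lambda>(l, r). l + r) ` (Poly_Mapping.keys f \<times> Poly_Mapping.keys g)"
  have fin: "finite S" unfolding S_def by simp
  have "op (f * g) h = (\<Sum>\<gamma>\<in>S. Poly_Mapping.lookup (f * g) \<gamma> * dp \<gamma> h)"
    by (rule op_superset[OF fin]) (use keys_mult[of f g] in \<open>auto simp: S_def\<close>)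
  also have "\<dots> = (\<Sum>\<gamma>\<in>S. \<Sum>l\<in>Poly_Mapping.keys f. \<Sum>r\<in>Poly_Mapping.keys g.
      (if \<gamma> = l + r then Poly_Mapping.lookup f l * Poly_Mapping.lookup g r * dp \<gamma> h else 0))"
    unfolding lookup_mult_keys sum_distrib_right by (intro sum.cong refl) auto
  also have "\<dots> = (\<Sum>l\<in>Poly_Mapping.keys f. \<Sum>r\<in>Poly_Mapping.keys g. \<Sum>\<gamma>\<in>S.
      (if \<gamma> = l + r then Poly_Mapping.lookup f l * Poly_Mapping.lookup g r * dp \<gamma> h else 0))"
    by (subst sum.swap) (subst (2) sum.swap, rule refl)
  also have "\<dots> = (\<Sum>l\<in>Poly_Mapping.keys f. \<Sum>r\<in>Poly_Mapping.keys g.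
      Poly_Mapping.lookup f l * Poly_Mapping.lookup g r * dp (l + r) h)"
  proof (intro sum.cong refl)
    fix l r assume "l \<in> Poly_Mapping.keys f" "r \<in> Poly_Mapping.keys g"
    then have "l + r \<in> S" unfolding S_def by auto
    then show "(\<Sum>\<gamma>\<in>S. (if \<gamma> = l + r then Poly_Mapping.lookup f l * Poly_Mapping.lookup g r * dp \<gamma> h else 0))
      = Poly_Mapping.lookup f l * Poly_Mapping.lookup g r * dp (l + r) h"
      using fin by (simp add: sum.delta')
  qed
  finally show ?thesis .
qed

lemma op_pderiv_xi_mult_xderiv:
  "op (pderiv_xi j p * xderiv j q) h = (\<Sum>\<alpha>\<in>Poly_Mapping.keys p. \<Sum>\<beta>\<in>Poly_Mapping.keys q.
     of_nat (Poly_Mapping.lookup \<alpha> j) * Poly_Mapping.lookup p \<alpha> * d j (Poly_Mapping.lookup q \<beta>)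
       * dp (\<alpha> - unit_index j + \<beta>) h)"
proof -
  have xderiv_sum: "(\<Sum>r\<in>Poly_Mapping.keys (xderiv j q). Poly_Mapping.lookup (xderiv j q) r * \<Psi> r) =
      (\<Sum>r\<in>Poly_Mapping.keys q. d j (Poly_Mapping.lookup q r) * \<Psi> r)" for \<Psi> :: "_ \<Rightarrow> 'r"
    by (rule sum.mono_neutral_cong_left) (auto simp: keys_xderiv in_keys_iff lookup_xderiv)
  have "op (pderiv_xi j p * xderiv j q) h = (\<Sum>l\<in>Poly_Mapping.keys (pderiv_xi j p).
      Poly_Mapping.lookup (pderiv_xi j p) l *
      (\<Sum>r\<in>Poly_Mapping.keys q. d j (Poly_Mapping.lookup q r) * dp (l + r) h))"
    unfolding op_mult xderiv_sum[symmetric] by (simp add: sum_distrib_left mult.assoc)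
  also have "\<dots> = (\<Sum>\<alpha>\<in>Poly_Mapping.keys p. of_nat (Poly_Mapping.lookup \<alpha> j) * Poly_Mapping.lookup p \<alpha> *
      (\<Sum>r\<in>Poly_Mapping.keys q. d j (Poly_Mapping.lookup q r) * dp (\<alpha> - unit_index j + r) h))"
    by (rule sum_keys_pderiv_xi)
  finally show ?thesis by (simp add: sum_distrib_left mult.assoc)
qed

definition leibniz_term :: "((nat \<Rightarrow>\<^sub>0 nat) \<Rightarrow>\<^sub>0 'r) \<Rightarrow> 'r \<Rightarrow> 'r \<Rightarrow> 'r" where
  "leibniz_term p r g = (\<Sum>\<alpha>\<in>Poly_Mapping.keys p. Poly_Mapping.lookup p \<alpha> * leibniz_sum \<alpha> r g)"

definition leibniz_remainder :: "((nat \<Rightarrow>\<^sub>0 nat) \<Rightarrow>\<^sub>0 'r) \<Rightarrow> 'r \<Rightarrow> 'r \<Rightarrow> 'r" where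
  "leibniz_remainder p r g = op p (r * g) - r * op p g - leibniz_term p r g"

lemma leibniz_remainder_order:
  assumes "valid_symbol n p" "\<And>\<alpha>. \<alpha> \<in> Poly_Mapping.keys p \<Longrightarrow> total_deg \<alpha> \<le> a"
  shows "lower_order (a - 1) (leibniz_remainder p r)"
proof -
  have "lower_order (a - 1) (\<lambda>g. \<Sum>\<alpha>\<in>Poly_Mapping.keys p. Poly_Mapping.lookup p \<alpha> *
      (dp \<alpha> (r * g) - r * dp \<alpha> g - leibniz_sum \<alpha> r g))"
  proof (intro lower_order_sum lower_order_scale)
    fix \<alpha> assume \<alpha>: "\<alpha> \<in> Poly_Mapping.keys p"
    have "lower_order (total_deg \<alpha> - 1) (\<lambda>g. dp \<alpha> (r * g) - r * dp \<alpha> g - leibniz_sum \<alpha> r g)"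
      by (rule leibniz) (use assms(1) \<alpha> in \<open>auto simp: valid_symbol_iff\<close>)
    then show "lower_order (a - 1) (\<lambda>g. dp \<alpha> (r * g) - r * dp \<alpha> g - leibniz_sum \<alpha> r g)"
      by (rule lower_order_mono) (use assms(2)[OF \<alpha>] in auto)
  qed
  then show ?thesis
    by (rule lower_order_cong)
       (simp add: leibniz_remainder_def leibniz_term_def op_of_def algebra_simps sum_subtractf
         sum_distrib_left sum.distrib)
qed

lemma leibniz_term_sum:
  assumes "valid_symbol n q"
  shows "(\<Sum>\<beta>\<in>Poly_Mapping.keys q. leibniz_term p (Poly_Mapping.lookup q \<beta>) (dp \<beta> f))
    = (\<Sum>j<n. op (pderiv_xi j p * xderiv j q) f)"
proof -
  have "(\<Sum>\<beta>\<in>Poly_Mapping.keys q. leibniz_term p (Poly_Mapping.lookup q \<beta>) (dp \<beta> f)) =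
     (\<Sum>\<beta>\<in>Poly_Mapping.keys q. \<Sum>j<n. \<Sum>\<alpha>\<in>Poly_Mapping.keys p.
        of_nat (Poly_Mapping.lookup \<alpha> j) * Poly_Mapping.lookup p \<alpha> *
        d j (Poly_Mapping.lookup q \<beta>) * dp (\<alpha> - unit_index j + \<beta>) f)"
    unfolding leibniz_term_def leibniz_sum_def using assms
    by (intro sum.cong refl)
       (auto simp: dp_index_add valid_symbol_iff sum_distrib_left sum.swap[of _ "{..<n}"] mult_ac)
  also have "\<dots> = (\<Sum>j<n. \<Sum>\<alpha>\<in>Poly_Mapping.keys p. \<Sum>\<beta>\<in>Poly_Mapping.keys q.
        of_nat (Poly_Mapping.lookup \<alpha> j) * Poly_Mapping.lookup p \<alpha> *
        d j (Poly_Mapping.lookup q \<beta>) * dp (\<alpha> - unit_index j + \<beta>) f)"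
    by (subst sum.swap) (subst (2) sum.swap, rule refl)
  also have "\<dots> = (\<Sum>j<n. op (pderiv_xi j p * xderiv j q) f)"
    by (simp add: op_pderiv_xi_mult_xderiv)
  finally show ?thesis .
qed

text \<open>Expanding both compositions term by term: the zeroth-order Leibniz terms cancel, the
  first-order ones give the Poisson bracket, and what is left are the Leibniz remainders.\<close>

lemma commutator_expansion:
  assumes "valid_symbol n p" "valid_symbol n q"
  shows "op p (op q f) - op q (op p f) - op (poisson_bracket p q) f
    = (\<Sum>\<beta>\<in>Poly_Mapping.keys q. leibniz_remainder p (Poly_Mapping.lookup q \<beta>) (dp \<beta> f))
      - (\<Sum>\<alpha>\<in>Poly_Mapping.keys p. leibniz_remainder q (Poly_Mapping.lookup p \<alpha>) (dp \<alpha> f))"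
proof -
  have expand: "op p (op q f) = (\<Sum>\<beta>\<in>Poly_Mapping.keys q. Poly_Mapping.lookup q \<beta> * op p (dp \<beta> f)
       + leibniz_term p (Poly_Mapping.lookup q \<beta>) (dp \<beta> f)
       + leibniz_remainder p (Poly_Mapping.lookup q \<beta>) (dp \<beta> f))" for p q
    unfolding op_of_def[of K n x q] op_sum_arg leibniz_remainder_def by simp
  have zeroth_order: "(\<Sum>\<beta>\<in>Poly_Mapping.keys q. Poly_Mapping.lookup q \<beta> * op p (dp \<beta> f)) =
     (\<Sum>\<alpha>\<in>Poly_Mapping.keys p. Poly_Mapping.lookup p \<alpha> * op q (dp \<alpha> f))"
  proof -
    have "(\<Sum>\<beta>\<in>Poly_Mapping.keys q. Poly_Mapping.lookup q \<beta> * op p (dp \<beta> f)) =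
       (\<Sum>\<beta>\<in>Poly_Mapping.keys q. \<Sum>\<alpha>\<in>Poly_Mapping.keys p.
          Poly_Mapping.lookup q \<beta> * Poly_Mapping.lookup p \<alpha> * dp (\<alpha> + \<beta>) f)"
      unfolding op_of_def using assms(2)
      by (intro sum.cong refl) (auto simp: sum_distrib_left dp_index_add valid_symbol_iff mult.assoc)
    also have "\<dots> = (\<Sum>\<alpha>\<in>Poly_Mapping.keys p. \<Sum>\<beta>\<in>Poly_Mapping.keys q.
        Poly_Mapping.lookup p \<alpha> * Poly_Mapping.lookup q \<beta> * dp (\<beta> + \<alpha>) f)"
      by (subst sum.swap) (simp add: add.commute mult.commute)
    also have "\<dots> = (\<Sum>\<alpha>\<in>Poly_Mapping.keys p. Poly_Mapping.lookup p \<alpha> * op q (dp \<alpha> f))"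
      unfolding op_of_def using assms(1)
      by (intro sum.cong refl) (auto simp: sum_distrib_left dp_index_add valid_symbol_iff mult.assoc)
    finally show ?thesis .
  qed
  have bracket: "op (poisson_bracket p q) f
      = (\<Sum>j<n. op (pderiv_xi j p * xderiv j q) f) - (\<Sum>j<n. op (pderiv_xi j q * xderiv j p) f)"
    unfolding poisson_bracket_def op_sum op_diff by (simp add: sum_subtractf)
  show ?thesis
    unfolding expand[of p q] expand[of q p] bracket sum.distrib zeroth_order
      leibniz_term_sum[OF assms(2)] leibniz_term_sum[OF assms(1)]
    by simp
qed

lemma leibniz_remainder_sum_order:
  assumes "valid_symbol n p" "valid_symbol n q"
    and "\<And>\<alpha>. \<alpha> \<in> Poly_Mapping.keys p \<Longrightarrow> total_deg \<alpha> \<le> a"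
    and "\<And>\<beta>. \<beta> \<in> Poly_Mapping.keys q \<Longrightarrow> total_deg \<beta> \<le> b"
  shows "lower_order (a + b - 1)
    (\<lambda>f. \<Sum>\<beta>\<in>Poly_Mapping.keys q. leibniz_remainder p (Poly_Mapping.lookup q \<beta>) (dp \<beta> f))"
proof (intro lower_order_sum)
  fix \<beta> assume \<beta>: "\<beta> \<in> Poly_Mapping.keys q"
  let ?R = "leibniz_remainder p (Poly_Mapping.lookup q \<beta>)"
  have R_order: "lower_order (a - 1) ?R" by (rule leibniz_remainder_order[OF assms(1,3)])
  show "lower_order (a + b - 1) (\<lambda>f. ?R (dp \<beta> f))"
  proof (cases "a = 0")
    case True
    then have "?R = (\<lambda>f. 0)" using R_order lower_order_0 by simp
    then show ?thesis by (simp add: lower_order_zero)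
  next
    case False
    have "lower_order (a - 1 + total_deg \<beta>) (\<lambda>f. ?R (dp \<beta> f))"
      by (rule lower_order_dp_right[OF R_order]) (use assms(2) \<beta> in \<open>auto simp: valid_symbol_iff\<close>)
    then show ?thesis by (rule lower_order_mono) (use assms(4)[OF \<beta>] False in auto)
  qed
qed

lemma commutator_formula:
  assumes "valid_symbol n p" "valid_symbol n q"
    and "\<And>\<alpha>. \<alpha> \<in> Poly_Mapping.keys p \<Longrightarrow> total_deg \<alpha> \<le> a"
    and "\<And>\<beta>. \<beta> \<in> Poly_Mapping.keys q \<Longrightarrow> total_deg \<beta> \<le> b"
  shows "lower_order (a + b - 1) (\<lambda>f. op p (op q f) - op q (op p f) - op (poisson_bracket p q) f)"
proof -
  have "lower_order (a + b - 1) (\<lambda>f.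
      (\<Sum>\<beta>\<in>Poly_Mapping.keys q. leibniz_remainder p (Poly_Mapping.lookup q \<beta>) (dp \<beta> f))
      - (\<Sum>\<alpha>\<in>Poly_Mapping.keys p. leibniz_remainder q (Poly_Mapping.lookup p \<alpha>) (dp \<alpha> f)))"
    using leibniz_remainder_sum_order[OF assms] leibniz_remainder_sum_order[OF assms(2,1,4,3)]
    by (intro lower_order_diff) (simp_all add: add.commute)
  then show ?thesis by (rule lower_order_cong) (simp add: commutator_expansion[OF assms(1,2)])
qed

end

definition homog_part :: "((nat \<Rightarrow>\<^sub>0 nat) \<Rightarrow>\<^sub>0 'r::comm_ring_1) \<Rightarrow> nat \<Rightarrow> ((nat \<Rightarrow>\<^sub>0 nat) \<Rightarrow>\<^sub>0 'r)" where
  "homog_part c a = Abs_poly_mapping (\<lambda>\<alpha>. if total_deg \<alpha> = a then Poly_Mapping.lookup c \<alpha> else 0)"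

lemma lookup_homog_part:
  "Poly_Mapping.lookup (homog_part c a) \<alpha> = (if total_deg \<alpha> = a then Poly_Mapping.lookup c \<alpha> else 0)"
proof -
  have "{\<alpha>. (if total_deg \<alpha> = a then Poly_Mapping.lookup c \<alpha> else 0) \<noteq> 0} \<subseteq> Poly_Mapping.keys c"
    by (auto simp: in_keys_iff split: if_splits)
  then have "finite {\<alpha>. (if total_deg \<alpha> = a then Poly_Mapping.lookup c \<alpha> else 0) \<noteq> 0}"
    by (rule finite_subset) simp
  then show ?thesis unfolding homog_part_def by simp
qed

lemma keys_homog_part:
  "\<alpha> \<in> Poly_Mapping.keys (homog_part c a) \<Longrightarrow> total_deg \<alpha> = a \<and> \<alpha> \<in> Poly_Mapping.keys c"
  by (auto simp: in_keys_iff lookup_homog_part split: if_splits)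

lemma keys_minus_homog_part:
  "\<alpha> \<in> Poly_Mapping.keys (c - homog_part c a) \<Longrightarrow> total_deg \<alpha> \<noteq> a \<and> \<alpha> \<in> Poly_Mapping.keys c"
  by (auto simp: in_keys_iff lookup_homog_part lookup_minus split: if_splits)

lemma principal_symbol_homog_part:
  "principal_symbol K n x T = homog_part (full_symbol K n x T) (order K n x T)"
  unfolding principal_symbol_def homog_part_def ..

lemma total_deg_le_order:
  "\<alpha> \<in> Poly_Mapping.keys (full_symbol K n x T) \<Longrightarrow> total_deg \<alpha> \<le> order K n x T"
  unfolding order_def by (intro Max_ge) auto

lemma constant_poly_add:
  "subfield_char0 K \<Longrightarrow> constant_poly K f \<Longrightarrow> constant_poly K g \<Longrightarrow> constant_poly K (f + g)"
  unfolding constant_poly_def subfield_char0_def by (simp add: lookup_add)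

lemma constant_poly_uminus: "subfield_char0 K \<Longrightarrow> constant_poly K f \<Longrightarrow> constant_poly K (- f)"
  unfolding constant_poly_def subfield_char0_def by simp blast

lemma constant_poly_zero: "subfield_char0 K \<Longrightarrow> constant_poly K 0"
  unfolding constant_poly_def subfield_char0_def by simp

lemma constant_poly_one: "subfield_char0 K \<Longrightarrow> constant_poly K 1"
  unfolding constant_poly_def subfield_char0_def by (simp add: lookup_one when_def)

lemma constant_poly_mult:
  assumes "subfield_char0 K" "constant_poly K f" "constant_poly K g"
  shows "constant_poly K (f * g)"
  using assms unfolding constant_poly_def lookup_mult_keys
  by (intro allI subfield_sum[OF assms(1)]) (auto simp: subfield_char0_def)

lemma constant_poly_sum:
  "subfield_char0 K \<Longrightarrow> (\<And>i. i \<in> A \<Longrightarrow> constant_poly K (f i)) \<Longrightarrow> constant_poly K (sum f A)"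
  by (induction A rule: infinite_finite_induct) (auto intro: constant_poly_add constant_poly_zero)

lemma constant_poly_prod:
  "subfield_char0 K \<Longrightarrow> (\<And>i. i \<in> A \<Longrightarrow> constant_poly K (f i)) \<Longrightarrow> constant_poly K (prod f A)"
  by (induction A rule: infinite_finite_induct) (auto intro: constant_poly_mult constant_poly_one)

lemma constant_poly_of_int: "subfield_char0 K \<Longrightarrow> constant_poly K (of_int k)"
proof -
  assume K: "subfield_char0 K"
  have nat: "constant_poly K (of_nat m)" for m
    by (induction m) (auto intro: constant_poly_add constant_poly_one constant_poly_zero K)
  show ?thesis
  proof (cases "k \<ge> 0")
    case True
    then show ?thesis using nat[of "nat k"] by simp
  next
    case False
    then show ?thesis using constant_poly_uminus[OF K nat[of "nat (- k)"]] by simp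
  qed
qed

lemma constant_poly_det:
  assumes K: "subfield_char0 K" and A: "A \<in> carrier_mat m m"
    and entries: "\<And>i j. i < m \<Longrightarrow> j < m \<Longrightarrow> constant_poly K (A $$ (i, j))"
  shows "constant_poly K (det A)"
  unfolding det_def'[OF A]
proof (intro constant_poly_sum[OF K] constant_poly_mult[OF K] constant_poly_of_int[OF K]
    constant_poly_prod[OF K])
  fix p i assume "p \<in> {p. p permutes {0..<m}}" "i \<in> {0..<m}"
  then show "constant_poly K (A $$ (i, p i))"
    using entries by (auto dest: permutes_in_image)
qed

lemma constant_poly_pderiv: "subfield_char0 K \<Longrightarrow> constant_poly K c \<Longrightarrow> constant_poly K (pderiv_xi j c)"
  unfolding constant_poly_def lookup_pderiv_xi
  using subfield_of_nat by (metis subfield_char0_def)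

text \<open>The coefficient of f g at the sum of the largest monomials of f and g (for any linear
  order on monomials compatible with addition) is the product of the leading coefficients.\<close>

lemma lookup_mult_Max:
  fixes f g :: "(nat \<Rightarrow>\<^sub>0 nat) \<Rightarrow>\<^sub>0 'a::comm_ring_1"
  assumes "f \<noteq> 0" "g \<noteq> 0"
  defines "mf \<equiv> Max (Poly_Mapping.keys f)" and "mg \<equiv> Max (Poly_Mapping.keys g)"
  shows "Poly_Mapping.lookup (f * g) (mf + mg) = Poly_Mapping.lookup f mf * Poly_Mapping.lookup g mg"
    and "mf \<in> Poly_Mapping.keys f" and "mg \<in> Poly_Mapping.keys g"
proof -
  have ne: "Poly_Mapping.keys f \<noteq> {}" "Poly_Mapping.keys g \<noteq> {}" using assms(1,2)
    by (metis keys_zero lookup_zero not_in_keys_iff_lookup_eq_zero poly_mapping_eqI empty_iff)+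
  show mf: "mf \<in> Poly_Mapping.keys f" and mg: "mg \<in> Poly_Mapping.keys g"
    unfolding mf_def mg_def using ne by auto
  have unique: "l = mf \<and> r = mg"
    if "l \<in> Poly_Mapping.keys f" "r \<in> Poly_Mapping.keys g" "mf + mg = l + r" for l r
  proof (rule ccontr)
    have le: "l \<le> mf" "r \<le> mg" using that(1,2) unfolding mf_def mg_def by auto
    assume "\<not> (l = mf \<and> r = mg)"
    then have "l < mf \<or> r < mg" using le by auto
    then have "l + r < mf + mg" using le by (meson add_le_less_mono add_less_le_mono)
    then show False using that(3) by simp
  qed
  have "Poly_Mapping.lookup (f * g) (mf + mg) = (\<Sum>l\<in>Poly_Mapping.keys f. \<Sum>r\<in>Poly_Mapping.keys g.
      if l = mf \<and> r = mg then Poly_Mapping.lookup f l * Poly_Mapping.lookup g r else 0)"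
    unfolding lookup_mult_keys by (intro sum.cong refl) (use unique in auto)
  also have "\<dots> = (\<Sum>l\<in>Poly_Mapping.keys f.
      if l = mf then Poly_Mapping.lookup f mf * Poly_Mapping.lookup g mg else 0)"
    by (intro sum.cong refl) (use mg in \<open>auto simp: sum.delta'\<close>)
  also have "\<dots> = Poly_Mapping.lookup f mf * Poly_Mapping.lookup g mg"
    using mf by (simp add: sum.delta')
  finally show "Poly_Mapping.lookup (f * g) (mf + mg) = Poly_Mapping.lookup f mf * Poly_Mapping.lookup g mg" .
qed

text \<open>A nonzero constant polynomial is not a zero divisor in R[\<xi>]: its leading coefficient is
  a unit of k.\<close>

lemma constant_poly_no_zero_divisor:
  fixes f g :: "(nat \<Rightarrow>\<^sub>0 nat) \<Rightarrow>\<^sub>0 'a::comm_ring_1"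
  assumes K: "subfield_char0 K" and "constant_poly K f" "f \<noteq> 0" "f * g = 0"
  shows "g = 0"
proof (rule ccontr)
  assume "g \<noteq> 0"
  define mf where "mf = Max (Poly_Mapping.keys f)"
  define mg where "mg = Max (Poly_Mapping.keys g)"
  note lead = lookup_mult_Max[OF \<open>f \<noteq> 0\<close> \<open>g \<noteq> 0\<close>, folded mf_def mg_def]
  have "Poly_Mapping.lookup f mf \<in> K" using assms(2) unfolding constant_poly_def by blast
  moreover have "Poly_Mapping.lookup f mf \<noteq> 0" using lead(2) by (simp add: in_keys_iff)
  ultimately obtain u where u: "u * Poly_Mapping.lookup f mf = 1"
    using K unfolding subfield_char0_def by (metis mult.commute)
  have "Poly_Mapping.lookup g mg = u * (Poly_Mapping.lookup f mf * Poly_Mapping.lookup g mg)"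
    by (simp add: mult.assoc[symmetric] u)
  also have "\<dots> = 0" using lead(1) assms(4) by simp
  finally show False using lead(3) by (simp add: in_keys_iff)
qed

text \<open>If A w = 0 then det A \<cdot> w = adj(A) A w = 0, over any commutative ring.\<close>

lemma det_mult_kernel_vec:
  assumes A: "A \<in> carrier_mat n n" and w: "w \<in> carrier_vec n"
    and Aw: "A *\<^sub>v w = 0\<^sub>v n" and j: "j < n"
  shows "det A * w $ j = 0"
proof -
  have "det A \<cdot>\<^sub>v w = (det A \<cdot>\<^sub>m 1\<^sub>m n) *\<^sub>v w" using w by auto
  also have "\<dots> = (adj_mat A * A) *\<^sub>v w" using adj_mat(3)[OF A] by simp
  also have "\<dots> = adj_mat A *\<^sub>v (A *\<^sub>v w)" by (rule assoc_mult_mat_vec[OF adj_mat(1)[OF A] A w])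
  also have "\<dots> = 0\<^sub>v n" using adj_mat(1)[OF A] by (intro eq_vecI) (auto simp: Aw)
  finally show ?thesis using j w by (metis carrier_vecD index_smult_vec(1) index_zero_vec(1))
qed

section \<open>The top-degree part of the Poisson bracket\<close>

context coordinates
begin

lemma lookup_pderiv_xderiv_homogeneous:
  assumes "\<And>\<alpha>. \<alpha> \<in> Poly_Mapping.keys s \<Longrightarrow> total_deg \<alpha> = a"
    and "\<And>\<beta>. \<beta> \<in> Poly_Mapping.keys t \<Longrightarrow> total_deg \<beta> = b"
    and "total_deg \<gamma> + 1 \<noteq> a + b"
  shows "Poly_Mapping.lookup (pderiv_xi j s * xderiv j t) \<gamma> = 0"
proof (rule lookup_mult_eq_zero)
  fix l r assume "l \<in> Poly_Mapping.keys (pderiv_xi j s)" "r \<in> Poly_Mapping.keys (xderiv j t)"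
  then have "total_deg l + 1 = a" "total_deg r = b"
    using assms(1)[OF keys_pderiv_xi] assms(2) keys_xderiv[THEN subsetD] by auto
  then show "\<gamma> \<noteq> l + r" using assms(3) by auto
qed

lemma lookup_pderiv_xderiv_top:
  assumes p: "\<And>\<alpha>. \<alpha> \<in> Poly_Mapping.keys p \<Longrightarrow> total_deg \<alpha> \<le> a"
    and q: "\<And>\<beta>. \<beta> \<in> Poly_Mapping.keys q \<Longrightarrow> total_deg \<beta> \<le> b"
    and \<gamma>: "total_deg \<gamma> + 1 = a + b"
  shows "Poly_Mapping.lookup (pderiv_xi j p * xderiv j q) \<gamma>
    = Poly_Mapping.lookup (pderiv_xi j (homog_part p a) * xderiv j (homog_part q b)) \<gamma>"
proof -
  define sp sq where "sp = homog_part p a" and "sq = homog_part q b"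
  define pl ql where "pl = p - sp" and "ql = q - sq"
  have pl_deg: "total_deg \<alpha> < a" if "\<alpha> \<in> Poly_Mapping.keys pl" for \<alpha>
    using keys_minus_homog_part[of \<alpha> p a] p[of \<alpha>] that unfolding pl_def sp_def by fastforce
  have ql_deg: "total_deg \<beta> < b" if "\<beta> \<in> Poly_Mapping.keys ql" for \<beta>
    using keys_minus_homog_part[of \<beta> q b] q[of \<beta>] that unfolding ql_def sq_def by fastforce
  have sp_deg: "total_deg \<alpha> = a" if "\<alpha> \<in> Poly_Mapping.keys sp" for \<alpha>
    using keys_homog_part that unfolding sp_def by blast
  have low1: "Poly_Mapping.lookup (pderiv_xi j sp * xderiv j ql) \<gamma> = 0"
  proof (rule lookup_mult_eq_zero)
    fix l r assume "l \<in> Poly_Mapping.keys (pderiv_xi j sp)" "r \<in> Poly_Mapping.keys (xderiv j ql)"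
    then have "total_deg l + 1 = a" "total_deg r < b"
      using sp_deg[OF keys_pderiv_xi] ql_deg keys_xderiv[THEN subsetD] by auto
    then show "\<gamma> \<noteq> l + r" using \<gamma> by auto
  qed
  have low2: "Poly_Mapping.lookup (pderiv_xi j pl * xderiv j q) \<gamma> = 0"
  proof (rule lookup_mult_eq_zero)
    fix l r assume "l \<in> Poly_Mapping.keys (pderiv_xi j pl)" "r \<in> Poly_Mapping.keys (xderiv j q)"
    then have "total_deg l + 1 < a" "total_deg r \<le> b"
      using pl_deg[OF keys_pderiv_xi] q keys_xderiv[THEN subsetD] by auto
    then show "\<gamma> \<noteq> l + r" using \<gamma> by auto
  qed
  have "pderiv_xi j p * xderiv j q
      = pderiv_xi j sp * xderiv j sq + pderiv_xi j sp * xderiv j ql + pderiv_xi j pl * xderiv j q"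
    using pderiv_add[of j sp pl] xderiv_add[of j sq ql]
    by (simp add: pl_def ql_def algebra_simps)
  then show ?thesis using low1 low2 by (simp add: lookup_add sp_def sq_def)
qed

lemma poisson_bracket_top:
  assumes "\<And>\<alpha>. \<alpha> \<in> Poly_Mapping.keys p \<Longrightarrow> total_deg \<alpha> \<le> a"
    and "\<And>\<beta>. \<beta> \<in> Poly_Mapping.keys q \<Longrightarrow> total_deg \<beta> \<le> b"
    and "total_deg \<gamma> + 1 = a + b"
  shows "Poly_Mapping.lookup (poisson_bracket p q) \<gamma>
    = Poly_Mapping.lookup (poisson_bracket (homog_part p a) (homog_part q b)) \<gamma>"
proof -
  have "total_deg \<gamma> + 1 = b + a" using assms(3) by simp
  then show ?thesis
    using lookup_pderiv_xderiv_top[OF assms] lookup_pderiv_xderiv_top[OF assms(2,1)]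
    by (simp add: poisson_bracket_def lookup_sum lookup_minus)
qed

text \<open>If op p and op q commute, the commutator formula leaves only lower-order terms, so the
  Poisson bracket vanishes in all degrees \<ge> a + b - 1.\<close>

lemma commuting_poisson_bracket_coeff:
  assumes "valid_symbol n p" "valid_symbol n q"
    and "\<And>\<alpha>. \<alpha> \<in> Poly_Mapping.keys p \<Longrightarrow> total_deg \<alpha> \<le> a"
    and "\<And>\<beta>. \<beta> \<in> Poly_Mapping.keys q \<Longrightarrow> total_deg \<beta> \<le> b"
    and commute: "\<And>f. op p (op q f) = op q (op p f)"
    and "total_deg \<gamma> + 1 \<ge> a + b"
  shows "Poly_Mapping.lookup (poisson_bracket p q) \<gamma> = 0"
proof -
  have "lower_order (a + b - 1) (\<lambda>f. - (op p (op q f) - op q (op p f) - op (poisson_bracket p q) f))"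
    by (intro lower_order_uminus commutator_formula assms(1-4))
  then have "lower_order (a + b - 1) (op (poisson_bracket p q))"
    by (rule lower_order_cong) (simp add: commute)
  then show ?thesis
    by (rule lower_order_coeff[OF valid_poisson_bracket[OF assms(1,2)]]) (use assms(6) in auto)
qed

lemma commuting_constant_top_part:
  assumes "valid_symbol n p" "valid_symbol n q"
    and "\<And>\<alpha>. \<alpha> \<in> Poly_Mapping.keys p \<Longrightarrow> total_deg \<alpha> \<le> a"
    and "\<And>\<beta>. \<beta> \<in> Poly_Mapping.keys q \<Longrightarrow> total_deg \<beta> \<le> b"
    and "\<And>f. op p (op q f) = op q (op p f)"
    and top_const: "\<And>\<alpha>. Poly_Mapping.lookup (homog_part p a) \<alpha> \<in> K"
  shows "(\<Sum>j<n. pderiv_xi j (homog_part p a) * xderiv j (homog_part q b)) = 0"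
proof (rule poly_mapping_eqI)
  fix \<gamma>
  show "Poly_Mapping.lookup (\<Sum>j<n. pderiv_xi j (homog_part p a) * xderiv j (homog_part q b)) \<gamma>
      = Poly_Mapping.lookup 0 \<gamma>"
  proof (cases "total_deg \<gamma> + 1 = a + b")
    case True
    have "poisson_bracket (homog_part p a) (homog_part q b)
        = (\<Sum>j<n. pderiv_xi j (homog_part p a) * xderiv j (homog_part q b))"
      unfolding poisson_bracket_def xderiv_const[OF top_const] by simp
    then have "Poly_Mapping.lookup (\<Sum>j<n. pderiv_xi j (homog_part p a) * xderiv j (homog_part q b)) \<gamma>
        = Poly_Mapping.lookup (poisson_bracket p q) \<gamma>"
      using poisson_bracket_top[OF assms(3,4) True] by simp
    also have "\<dots> = 0"
      using commuting_poisson_bracket_coeff[OF assms(1-5)] True by simp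
    finally show ?thesis by simp
  next
    case False
    have "Poly_Mapping.lookup (pderiv_xi j (homog_part p a) * xderiv j (homog_part q b)) \<gamma> = 0" for j
    proof (rule lookup_pderiv_xderiv_homogeneous)
      show "total_deg \<alpha> = a" if "\<alpha> \<in> Poly_Mapping.keys (homog_part p a)" for \<alpha>
        using keys_homog_part[OF that] by blast
      show "total_deg \<beta> = b" if "\<beta> \<in> Poly_Mapping.keys (homog_part q b)" for \<beta>
        using keys_homog_part[OF that] by blast
    qed (rule False)
    then show ?thesis by (simp add: lookup_sum)
  qed
qed

lemma commuting_principal_symbols:
  assumes "P \<in> diffops K n x" "Q \<in> diffops K n x"
    and "constant_poly K (principal_symbol K n x P)"
    and "commutator P Q = (\<lambda>f. 0)"
  shows "(\<Sum>j<n. pderiv_xi j (principal_symbol K n x P) * xderiv j (principal_symbol K n x Q)) = 0"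
proof -
  obtain p q where p: "valid_symbol n p" "P = op p" and q: "valid_symbol n q" "Q = op q"
    using assms(1,2) unfolding diffops_def by blast
  have symbols: "full_symbol K n x P = p" "full_symbol K n x Q = q"
    using full_symbol_op p q by simp_all
  show ?thesis
    unfolding principal_symbol_homog_part symbols
  proof (rule commuting_constant_top_part[OF p(1) q(1)])
    show "total_deg \<alpha> \<le> order K n x P" if "\<alpha> \<in> Poly_Mapping.keys p" for \<alpha>
      using total_deg_le_order[of \<alpha> K n x P] that symbols by simp
    show "total_deg \<beta> \<le> order K n x Q" if "\<beta> \<in> Poly_Mapping.keys q" for \<beta>
      using total_deg_le_order[of \<beta> K n x Q] that symbols by simp
    show "op p (op q f) = op q (op p f)" for f
      using fun_cong[OF assms(4), of f] unfolding commutator_def p q by simp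
    show "Poly_Mapping.lookup (homog_part p (order K n x P)) \<alpha> \<in> K" for \<alpha>
      using assms(3) unfolding principal_symbol_homog_part symbols constant_poly_def by blast
  qed
qed

lemma constant_poly_if_xderiv_zero:
  assumes "\<And>j. j < n \<Longrightarrow> xderiv j c = 0"
  shows "constant_poly K c"
  unfolding constant_poly_def
proof
  fix \<alpha>
  show "Poly_Mapping.lookup c \<alpha> \<in> K"
    by (rule in_K_if_d_zero) (use assms in \<open>simp add: lookup_xderiv[symmetric]\<close>)
qed

end

theorem mainTheorem5:
  fixes K :: "'r::comm_ring_1 set" and n :: nat and x :: "nat \<Rightarrow> 'r"
    and P :: "nat \<Rightarrow> 'r \<Rightarrow> 'r" and Q :: "'r \<Rightarrow> 'r"
  assumes "subfield_char0 K"
    and "coordinate_system K n x"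
    and "\<forall>i<n. P i \<in> diffops K n x"
    and "\<forall>i<n. constant_poly K (principal_symbol K n x (P i))"
    and "det (mat n n (\<lambda>(i, j). pderiv_xi j (principal_symbol K n x (P i)))) \<noteq> 0"
    and "Q \<in> diffops K n x"
    and "\<forall>i<n. commutator (P i) Q = (\<lambda>f. 0)"
  shows "constant_poly K (principal_symbol K n x Q)"
proof -
  interpret coordinates K n x using assms(1,2) by unfold_locales
  define M where "M = mat n n (\<lambda>(i, j). pderiv_xi j (principal_symbol K n x (P i)))"
  define w where "w = vec n (\<lambda>j. xderiv j (principal_symbol K n x Q))"
  have M: "M \<in> carrier_mat n n" and w: "w \<in> carrier_vec n" unfolding M_def w_def by simp_all
  have "M *\<^sub>v w = 0\<^sub>v n"
    using commuting_principal_symbols assms(3,4,6,7)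
    by (intro eq_vecI) (simp_all add: M_def w_def scalar_prod_def atLeast0LessThan)
  moreover have "constant_poly K (det M)"
    using assms(4) by (intro constant_poly_det[OF assms(1) M]) (simp add: M_def constant_poly_pderiv[OF assms(1)])
  ultimately have "w $ j = 0" if "j < n" for j
    using det_mult_kernel_vec[OF M w _ that] assms(5) constant_poly_no_zero_divisor[OF assms(1)]
    unfolding M_def by blast
  then show ?thesis
    by (intro constant_poly_if_xderiv_zero) (simp add: w_def)
qed

end
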